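(* Let $\Gamma$ be a lattice satisfying the standing assumptions below. Let $S_E\subseteq C_1(\Gamma)$ be the set of edges with nonzero syndrome of some bit-flip error, i.e. $S_E=\partial(F_0)$ for some set of faces $F_0$, and let $\mathcal{E}$ be the set of faces returned by Procedure P1 on input $S_E$. Then there exists a unique set of faces $\hat{\mathcal{E}}\subseteq\mathcal{E}$ such that $\partial(\hat{\mathcal{E}})=S_E$.
   Context: $\Gamma$ is a finite, connected three-dimensional cell complex with edges $C_1(\Gamma)$ (partial edges allowed at the boundary), faces $C_2(\Gamma)$, volumes $C_3(\Gamma)$; $\partial(f)$ denotes the boundary edges of a face, $\partial(\nu)$ the boundary faces of a volume, $\iota(e)$ the faces containing edge $e$, $\iota(f)$ the volumes having $f$ in their boundary; for a set of faces $F$, $\partial(F)$ is the symmetric difference of the $\partial(f)$, $f\in F$. Every face lies in the boundary of at most two volumes. Standing assumptions: (L1) $\Gamma$ has no boundaries in its interior; (L2) the boundary of every face of $\Gamma$ and of its dual $\Gamma^*$ is a closed path or an open path beginning and ending with partial edges; the dual complex is connected. The 3D toric code on $\Gamma$: one qubit per face, stabilizer group generated by $B_e=\prod_{f\in\iota(e)}Z_f$ and $A_\nu=\prod_{f\in\partial(\nu)}X_f$; a logical operator is a Pauli operator commuting with all stabilizers but not in the stabilizer group (up to phase); $X_A=\prod_{f\in A}X_f$. A face path is a sequence of faces $\rho=(f_1,\dots,f_m)$ with pairwise distinct volumes $\Lambda(\rho)=(\nu_1,\dots,\nu_{m-1})$, $f_i,f_{i+1}\in\partial(\nu_i)$. Let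 $\mathcal{F}=\{f:|\iota(f)|=1\}$; faces $f,f'\in\mathcal{F}$ are face-equivalent if some face path $\rho$ from $f$ to $f'$ makes $\prod_{g\in\rho}Z_g$ a stabilizer (each face equivalent to itself); as in the paper this is an equivalence relation with classes $\mathcal{F}_1,\dots,\mathcal{F}_K$. The augmented lattice $\tilde\Gamma$ has the faces of $\Gamma$ and the volumes of $\Gamma$ plus new volumes $\bar\nu_i$ with $\partial(\bar\nu_i)=\mathcal{F}_i$. A set of faces $K$ is a cut set in $\tilde\Gamma$ if there are volumes $\nu,\nu'$ of $\tilde\Gamma$ such that every face path $\rho$ in $\tilde\Gamma$ with $f_1\in\partial(\nu)$, $f_m\in\partial(\nu')$, $\nu,\nu'\notin\Lambda(\rho)$ meets $K$. Procedure P1 (input $S_E$): set $\mathcal{E}=\emptyset$, $B=S_E$, all faces unexplored. Repeat rounds until all faces are explored: set $B'=\emptyset$; for each unexplored face $f$ with $\partial(f)\cap B\neq\emptyset$, mark $f$ explored and, if $\mathcal{E}\cup\{f\}$ is not a cut set in $\tilde\Gamma$, set $\mathcal{E}\leftarrow\mathcal{E}\cup\{f\}$ and $B'\leftarrow B'\cup\partial(f)$; at the end of the round set $B\leftarrow B'\setminus B$. It is assumed that the procedure terminates with every face explored; it returns $\mathcal{E}$. *)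

theory Defs
  imports Main
begin

record ('x, 'e, 'f, 'v) complex3 =
  verts :: "'x set"
  edges :: "'e set"
  faces :: "'f set"
  vols  :: "'v set"
  ends  :: "'e \<Rightarrow> 'x set"
  bdf   :: "'f \<Rightarrow> 'e set"
  bdv   :: "'v \<Rightarrow> 'f set"

definition symdiff :: "'a set \<Rightarrow> 'a set \<Rightarrow> 'a set" where
  "symdiff A B = (A - B) \<union> (B - A)"

definition partial_edge :: "('x, 'e, 'f, 'v) complex3 \<Rightarrow> 'e \<Rightarrow> bool" where
  "partial_edge G e \<longleftrightarrow> card (ends G e) = 1"

definition cell_complex3 :: "('x, 'e, 'f, 'v) complex3 \<Rightarrow> bool" where
  "cell_complex3 G \<longleftrightarrow>
     finite (verts G) \<and> finite (edges G) \<and> finite (faces G) \<and> finite (vols G) \<and>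
     (\<forall>e\<in>edges G. ends G e \<subseteq> verts G \<and> (card (ends G e) = 1 \<or> card (ends G e) = 2)) \<and>
     (\<forall>f\<in>faces G. bdf G f \<subseteq> edges G) \<and>
     (\<forall>v\<in>vols G. bdv G v \<subseteq> faces G \<and> bdv G v \<noteq> {})"

definition iota_e :: "('x, 'e, 'f, 'v) complex3 \<Rightarrow> 'e \<Rightarrow> 'f set" where
  "iota_e G e = {f \<in> faces G. e \<in> bdf G f}"

definition iota_f :: "('x, 'e, 'f, 'v) complex3 \<Rightarrow> 'f \<Rightarrow> 'v set" where
  "iota_f G f = {v \<in> vols G. f \<in> bdv G v}"

definition at_most_two_vols :: "('x, 'e, 'f, 'v) complex3 \<Rightarrow> bool" where
  "at_most_two_vols G \<longleftrightarrow> (\<forall>f\<in>faces G. card (iota_f G f) \<le> 2)"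

text \<open>\<partial>(S) for a set of faces: symmetric difference of the boundaries, i.e. the edges lying
  in the boundary of an odd number of faces of S.\<close>
definition bd_faces :: "('x, 'e, 'f, 'v) complex3 \<Rightarrow> 'f set \<Rightarrow> 'e set" where
  "bd_faces G S = {e \<in> edges G. odd (card {f \<in> S. e \<in> bdf G f})}"

definition is_closed_path :: "('a \<Rightarrow> 'b set) \<Rightarrow> 'a list \<Rightarrow> bool" where
  "is_closed_path endp es \<longleftrightarrow>
     length es \<ge> 2 \<and> distinct es \<and>
     (\<exists>xs. length xs = length es \<and> distinct xs \<and>
        (\<forall>i<length es. endp (es ! i) = {xs ! i, xs ! (Suc i mod length es)}))"

definition is_open_partial_path :: "('a \<Rightarrow> 'b set) \<Rightarrow> 'a list \<Rightarrow> bool" where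
  "is_open_partial_path endp es \<longleftrightarrow>
     length es \<ge> 2 \<and> distinct es \<and>
     (\<exists>xs. Suc (length xs) = length es \<and> distinct xs \<and>
        endp (es ! 0) = {xs ! 0} \<and> endp (last es) = {last xs} \<and>
        (\<forall>i. 0 < i \<and> Suc i < length es \<longrightarrow> endp (es ! i) = {xs ! (i - 1), xs ! i}))"

definition boundary_is_path :: "('a \<Rightarrow> 'b set) \<Rightarrow> 'a set \<Rightarrow> bool" where
  "boundary_is_path endp S \<longleftrightarrow>
     (\<exists>es. set es = S \<and> (is_closed_path endp es \<or> is_open_partial_path endp es))"

text \<open>In \<Gamma>*, the
  vertices are the volumes of \<Gamma>, the dual edge of a face f has endpoints \<iota>(f) (partial iff
  |\<iota>(f)| = 1), and the dual face of an edge e has boundary \<iota>(e).\<close>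
definition L2 :: "('x, 'e, 'f, 'v) complex3 \<Rightarrow> bool" where
  "L2 G \<longleftrightarrow>
     (\<forall>f\<in>faces G. boundary_is_path (ends G) (bdf G f)) \<and>
     (\<forall>e\<in>edges G. boundary_is_path (iota_f G) (iota_e G e))"

definition conn :: "'a set \<Rightarrow> ('a \<Rightarrow> 'a \<Rightarrow> bool) \<Rightarrow> bool" where
  "conn S adj \<longleftrightarrow> (\<forall>a\<in>S. \<forall>b\<in>S. (\<lambda>x y. x \<in> S \<and> y \<in> S \<and> adj x y)\<^sup>*\<^sup>* a b)"

definition connected_complex :: "('x, 'e, 'f, 'v) complex3 \<Rightarrow> bool" where
  "connected_complex G \<longleftrightarrow> conn (verts G) (\<lambda>x y. \<exists>e\<in>edges G. ends G e = {x, y})"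

definition dual_connected :: "('x, 'e, 'f, 'v) complex3 \<Rightarrow> bool" where
  "dual_connected G \<longleftrightarrow> conn (vols G) (\<lambda>v w. \<exists>f\<in>faces G. iota_f G f = {v, w})"

text \<open>A Pauli operator on the face qubits, up to phase, is given by its X-support and its
  Z-support; multiplication is componentwise symmetric difference.\<close>
type_synonym 'f pauli = "'f set \<times> 'f set"

definition pmult :: "'f pauli \<Rightarrow> 'f pauli \<Rightarrow> 'f pauli" where
  "pmult p q = (symdiff (fst p) (fst q), symdiff (snd p) (snd q))"

inductive_set stab_group :: "('x, 'e, 'f, 'v) complex3 \<Rightarrow> 'f pauli set"
  for G :: "('x, 'e, 'f, 'v) complex3" where
  stab_id: "({}, {}) \<in> stab_group G"
| stab_B: "e \<in> edges G \<Longrightarrow> p \<in> stab_group G \<Longrightarrow> pmult ({}, iota_e G e) p \<in> stab_group G"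
| stab_A: "v \<in> vols G \<Longrightarrow> p \<in> stab_group G \<Longrightarrow> pmult (bdv G v, {}) p \<in> stab_group G"

text \<open>Z-support of prod_{g in rho} Z_g for a sequence of faces rho.\<close>
fun zprod_supp :: "'f list \<Rightarrow> 'f set" where
  "zprod_supp [] = {}"
| "zprod_supp (g # gs) = symdiff {g} (zprod_supp gs)"

definition face_path :: "'w set \<Rightarrow> ('w \<Rightarrow> 'f set) \<Rightarrow> 'f set \<Rightarrow> 'f list \<Rightarrow> 'w list \<Rightarrow> bool" where
  "face_path W bd F fs vs \<longleftrightarrow>
     length fs = Suc (length vs) \<and> set fs \<subseteq> F \<and> set vs \<subseteq> W \<and> distinct vs \<and>
     (\<forall>i<length vs. fs ! i \<in> bd (vs ! i) \<and> fs ! Suc i \<in> bd (vs ! i))"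

definition calF :: "('x, 'e, 'f, 'v) complex3 \<Rightarrow> 'f set" where
  "calF G = {f \<in> faces G. card (iota_f G f) = 1}"

definition face_equiv :: "('x, 'e, 'f, 'v) complex3 \<Rightarrow> 'f \<Rightarrow> 'f \<Rightarrow> bool" where
  "face_equiv G f f' \<longleftrightarrow> f \<in> calF G \<and> f' \<in> calF G \<and>
     (f = f' \<or> (\<exists>fs vs. face_path (vols G) (bdv G) (faces G) fs vs \<and> hd fs = f \<and> last fs = f' \<and>
                      ({}, zprod_supp fs) \<in> stab_group G))"

definition face_classes :: "('x, 'e, 'f, 'v) complex3 \<Rightarrow> 'f set set" where
  "face_classes G = {{g \<in> calF G. face_equiv G f g} | f. f \<in> calF G}"

definition aug_vols :: "('x, 'e, 'f, 'v) complex3 \<Rightarrow> ('v + 'f set) set" where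
  "aug_vols G = Inl ` vols G \<union> Inr ` face_classes G"

definition aug_bd :: "('x, 'e, 'f, 'v) complex3 \<Rightarrow> ('v + 'f set) \<Rightarrow> 'f set" where
  "aug_bd G w = (case w of Inl v \<Rightarrow> bdv G v | Inr C \<Rightarrow> C)"

definition is_cut_set :: "('x, 'e, 'f, 'v) complex3 \<Rightarrow> 'f set \<Rightarrow> bool" where
  "is_cut_set G K \<longleftrightarrow>
     (\<exists>\<nu>\<in>aug_vols G. \<exists>\<nu>'\<in>aug_vols G. \<forall>fs vs.
        face_path (aug_vols G) (aug_bd G) (faces G) fs vs \<and>
        hd fs \<in> aug_bd G \<nu> \<and> last fs \<in> aug_bd G \<nu>' \<and> \<nu> \<notin> set vs \<and> \<nu>' \<notin> set vs
        \<longrightarrow> set fs \<inter> K \<noteq> {})"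

text \<open>Rendered homologically: every set of faces with empty boundary (i.e. every X-type
  operator commuting with all B_e) is the boundary of a set of volumes of the augmented
  lattice.\<close>
definition L1 :: "('x, 'e, 'f, 'v) complex3 \<Rightarrow> bool" where
  "L1 G \<longleftrightarrow> (\<forall>D \<subseteq> faces G. bd_faces G D = {} \<longrightarrow>
     (\<exists>W \<subseteq> aug_vols G. D = {f \<in> faces G. odd (card {w \<in> W. f \<in> aug_bd G w})}))"

text \<open>Processing one face within a round: state (current \<E>, B').\<close>
definition p1_process :: "('x, 'e, 'f, 'v) complex3 \<Rightarrow> ('f set \<times> 'e set) \<Rightarrow> 'f \<Rightarrow> ('f set \<times> 'e set)" where
  "p1_process G st f =
     (if \<not> is_cut_set G (fst st \<union> {f}) then (fst st \<union> {f}, snd st \<union> bdf G f) else st)"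

text \<open>One round, from state (\<E>, B, explored) (only performed while not all faces are explored);
  the faces of the round are processed in an arbitrary order.\<close>
inductive p1_round :: "('x, 'e, 'f, 'v) complex3 \<Rightarrow> ('f set \<times> 'e set \<times> 'f set) \<Rightarrow>
    ('f set \<times> 'e set \<times> 'f set) \<Rightarrow> bool" for G where
  "Xp \<noteq> faces G \<Longrightarrow> R = {f \<in> faces G - Xp. bdf G f \<inter> B \<noteq> {}} \<Longrightarrow>
   distinct fl \<Longrightarrow> set fl = R \<Longrightarrow> foldl (p1_process G) (Ec, {}) fl = (Ec', B') \<Longrightarrow>
   p1_round G (Ec, B, Xp) (Ec', B' - B, Xp \<union> R)"

definition p1_returns :: "('x, 'e, 'f, 'v) complex3 \<Rightarrow> 'e set \<Rightarrow> 'f set \<Rightarrow> bool" where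
  "p1_returns G SE Ec \<longleftrightarrow> (\<exists>B. (p1_round G)\<^sup>*\<^sup>* ({}, SE, {}) (Ec, B, faces G))"

end

(* Existence. P1 explores every face f and rejects it only if adding it to the current set E
   makes a cut set of the augmented lattice. A cut set contains a nonempty set of faces with
   empty boundary, and as E itself is no cut set, this set contains f. Hence the boundary of
   every single face, and so the syndrome S_E = bd F0, is the boundary of a subset of the
   final set.

   Uniqueness. Two such subsets differ by a subset D of the final set with empty boundary. By
   (L1), D is the boundary of a set W of volumes of the augmented lattice, and every face path
   from a volume in W to one outside W uses a face of D. Since the final set is no cut set,
   D is empty.

   Both steps need that every face lies in none or two volumes of the augmented lattice. This
   rests on identifying the face classes with the components of the faces lying in a single
   volume, connected through shared edges; (L2) makes such components closed, and (L1)
   together with the dual connectivity produces the stabilizers witnessing face equivalence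
   along a component. *)

theory Submission
  imports Defs "HOL-Library.Transitive_Closure_Table"
begin

section \<open>Symmetric differences and parity\<close>

lemma symdiff_assoc: "symdiff (symdiff A B) C = symdiff A (symdiff B C)"
  by (auto simp: symdiff_def)

lemma symdiff_empty [simp]: "symdiff {} A = A" "symdiff A {} = A" "symdiff A A = {}"
  by (auto simp: symdiff_def)

lemma symdiff_eq_empty_iff: "symdiff A B = {} \<longleftrightarrow> A = B"
  by (auto simp: symdiff_def)

lemma Int_symdiff_distrib: "Z \<inter> symdiff A B = symdiff (Z \<inter> A) (Z \<inter> B)"
  by (auto simp: symdiff_def)

lemma symdiff_subset: "A \<subseteq> C \<Longrightarrow> B \<subseteq> C \<Longrightarrow> symdiff A B \<subseteq> C"
  by (auto simp: symdiff_def)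

lemma even_card_symdiff_iff:
  assumes "finite A" "finite B"
  shows "even (card (symdiff A B)) \<longleftrightarrow> (even (card A) \<longleftrightarrow> even (card B))"
proof -
  have "card (symdiff A B) = card (A - B) + card (B - A)"
    unfolding symdiff_def using assms by (intro card_Un_disjoint) auto
  moreover have "card A = card (A - B) + card (A \<inter> B)" "card B = card (B - A) + card (A \<inter> B)"
    using assms by (simp_all add: card_Diff_subset_Int Int_commute card_mono)
  ultimately show ?thesis
    by presburger
qed

lemma even_card_Int_symdiff:
  assumes "finite Z" "even (card (Z \<inter> A))" "even (card (Z \<inter> B))"
  shows "even (card (Z \<inter> symdiff A B))"
  using assms even_card_symdiff_iff[of "Z \<inter> A" "Z \<inter> B"] by (simp add: Int_symdiff_distrib)

definition symdiff_sum :: "('w \<Rightarrow> 'a set) \<Rightarrow> 'w set \<Rightarrow> 'a set" where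
  "symdiff_sum g W = {h. odd (card {w \<in> W. h \<in> g w})}"

lemma symdiff_sum_empty [simp]: "symdiff_sum g {} = {}"
  by (simp add: symdiff_sum_def)

lemma symdiff_sum_insert:
  assumes "finite W" "w \<notin> W"
  shows "symdiff_sum g (insert w W) = symdiff (g w) (symdiff_sum g W)"
proof -
  have "odd (card {v \<in> insert w W. h \<in> g v}) \<longleftrightarrow> (h \<in> g w \<longleftrightarrow> even (card {v \<in> W. h \<in> g v}))"
    for h
  proof -
    have "{v \<in> insert w W. h \<in> g v} =
        (if h \<in> g w then insert w {v \<in> W. h \<in> g v} else {v \<in> W. h \<in> g v})"
      by auto
    then show ?thesis
      using assms by simp
  qed
  then show ?thesis
    by (auto simp: symdiff_sum_def symdiff_def)
qed

lemma symdiff_sum_Un: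
  assumes "finite A" "finite B" "A \<inter> B = {}"
  shows "symdiff_sum g (A \<union> B) = symdiff (symdiff_sum g A) (symdiff_sum g B)"
  using assms
proof (induction A rule: finite_induct)
  case (insert w A)
  then show ?case
    by (simp add: symdiff_sum_insert symdiff_assoc)
qed simp

lemma symdiff_sum_subset: "(\<And>w. w \<in> W \<Longrightarrow> g w \<subseteq> C) \<Longrightarrow> symdiff_sum g W \<subseteq> C"
  unfolding symdiff_sum_def by (fastforce dest: odd_pos simp: card_gt_0_iff)

lemma even_card_Int_symdiff_sum:
  assumes "finite W" "finite Z" "\<And>w. w \<in> W \<Longrightarrow> even (card (Z \<inter> g w))"
  shows "even (card (Z \<inter> symdiff_sum g W))"
  using assms
proof (induction W rule: finite_induct)
  case (insert w W)
  then show ?case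
    by (simp add: symdiff_sum_insert even_card_Int_symdiff)
qed simp

text \<open>Sets are vectors over \<open>GF(2)\<close>: \<open>symdiff_span R\<close> is the linear span of \<open>R\<close>, and
  \<open>even (card (D \<inter> r))\<close> says that \<open>D\<close> and \<open>r\<close> are orthogonal.\<close>

inductive_set symdiff_span :: "'a set set \<Rightarrow> 'a set set" for R where
  symdiff_span_empty: "{} \<in> symdiff_span R"
| symdiff_span_step: "r \<in> R \<Longrightarrow> x \<in> symdiff_span R \<Longrightarrow> symdiff r x \<in> symdiff_span R"

lemma symdiff_span_symdiff:
  "x \<in> symdiff_span R \<Longrightarrow> y \<in> symdiff_span R \<Longrightarrow> symdiff x y \<in> symdiff_span R"
  by (induction x rule: symdiff_span.induct) (simp_all add: symdiff_assoc symdiff_span.intros)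

lemma symdiff_span_base: "r \<in> R \<Longrightarrow> r \<in> symdiff_span R"
  using symdiff_span_step[OF _ symdiff_span_empty] by fastforce

lemma symdiff_span_subset_span:
  "x \<in> symdiff_span R' \<Longrightarrow> R' \<subseteq> symdiff_span R \<Longrightarrow> x \<in> symdiff_span R"
  by (induction x rule: symdiff_span.induct) (auto intro: symdiff_span_empty symdiff_span_symdiff)

lemma even_card_Int_symdiff_span:
  assumes "x \<in> symdiff_span R" "finite D" "\<And>r. r \<in> R \<Longrightarrow> even (card (D \<inter> r))"
  shows "even (card (D \<inter> x))"
  using assms by (induction x rule: symdiff_span.induct) (simp_all add: even_card_Int_symdiff)

text \<open>The pivot step of the elimination below: after adjoining the pivot coordinate
  \<open>a \<in> r\<^sub>0\<close> to \<open>D\<close> if necessary, \<open>D\<close> is orthogonal to \<open>r\<^sub>0\<close>, so its parity on \<open>r\<close> is that of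
  the original \<open>D\<close> on \<open>r\<close> reduced by \<open>r\<^sub>0\<close>.\<close>

lemma even_card_Int_pivot_lift:
  assumes "finite D" "a \<notin> D" "a \<in> r\<^sub>0"
  shows "even (card ((if odd (card (D \<inter> r\<^sub>0)) then insert a D else D) \<inter> r)) \<longleftrightarrow>
    even (card (D \<inter> (if a \<in> r then symdiff r r\<^sub>0 else r)))"
    (is "even (card (?D' \<inter> r)) \<longleftrightarrow> _")
proof -
  have fin: "finite ?D'"
    using assms(1) by simp
  have outside: "?D' \<inter> s = D \<inter> s" if "a \<notin> s" for s
    using that by auto
  have r\<^sub>0_even: "even (card (?D' \<inter> r\<^sub>0))"
    using assms by (auto simp: Int_insert_left card_insert_if)
  show ?thesis
  proof (cases "a \<in> r")
    case True
    then have "D \<inter> symdiff r r\<^sub>0 = symdiff (?D' \<inter> r) (?D' \<inter> r\<^sub>0)"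
      using outside[of "symdiff r r\<^sub>0"] assms(3) by (auto simp: symdiff_def)
    then show ?thesis
      using True fin r\<^sub>0_even even_card_symdiff_iff[of "?D' \<inter> r" "?D' \<inter> r\<^sub>0"] by simp
  qed (simp add: outside)
qed

text \<open>Vectors orthogonal to the orthogonal complement of \<open>R\<close> lie in the span of \<open>R\<close>; the
  induction eliminates one coordinate at a time.\<close>

lemma symdiff_span_if_orthogonal:
  assumes "finite F" "\<And>r. r \<in> R \<Longrightarrow> r \<subseteq> F" "z \<subseteq> F"
    and "\<And>D. D \<subseteq> F \<Longrightarrow> \<forall>r\<in>R. even (card (D \<inter> r)) \<Longrightarrow> even (card (D \<inter> z))"
  shows "z \<in> symdiff_span R"
  using assms
proof (induction F arbitrary: R z rule: finite_induct)
  case empty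
  then show ?case
    by (simp add: symdiff_span_empty)
next
  case (insert a F)
  show ?case
  proof (cases "\<exists>r\<^sub>0\<in>R. a \<in> r\<^sub>0")
    case False
    then have "a \<notin> z"
      using insert.prems(3)[of "{a}"] by (auto simp: Int_insert_left)
    then show ?thesis
      using False insert.prems by (intro insert.IH) (auto, blast)
  next
    case True
    then obtain r\<^sub>0 where r\<^sub>0: "r\<^sub>0 \<in> R" "a \<in> r\<^sub>0"
      by blast
    define pivot where "pivot r = (if a \<in> r then symdiff r r\<^sub>0 else r)" for r
    have pivot_subset: "pivot r \<subseteq> F" if "r \<subseteq> insert a F" for r
      using that insert.prems(1)[OF r\<^sub>0(1)] r\<^sub>0(2) by (auto simp: pivot_def symdiff_def)
    have "pivot z \<in> symdiff_span (pivot ` R)"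
    proof (rule insert.IH)
      show "r \<subseteq> F" if "r \<in> pivot ` R" for r
        using that insert.prems(1) pivot_subset by blast
      show "pivot z \<subseteq> F"
        using insert.prems(2) by (rule pivot_subset)
      show "even (card (D \<inter> pivot z))"
        if D: "D \<subseteq> F" and orth: "\<forall>r\<in>pivot ` R. even (card (D \<inter> r))" for D
      proof -
        define D' where "D' = (if odd (card (D \<inter> r\<^sub>0)) then insert a D else D)"
        have "finite D" "a \<notin> D"
          using D insert.hyps finite_subset by blast+
        then have "even (card (D' \<inter> r)) \<longleftrightarrow> even (card (D \<inter> pivot r))" for r
          using even_card_Int_pivot_lift[OF _ _ r\<^sub>0(2)] by (simp add: D'_def pivot_def)
        moreover have "D' \<subseteq> insert a F"
          using D by (auto simp: D'_def)
        ultimately show ?thesis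
          using orth insert.prems(3)[of D'] by auto
      qed
    qed
    moreover have "pivot ` R \<subseteq> symdiff_span R"
      using r\<^sub>0(1) by (auto simp: pivot_def intro: symdiff_span_base symdiff_span_symdiff)
    ultimately have "pivot z \<in> symdiff_span R"
      by (rule symdiff_span_subset_span)
    moreover have "z = (if a \<in> z then symdiff (pivot z) r\<^sub>0 else pivot z)"
      by (auto simp: pivot_def symdiff_def)
    ultimately show ?thesis
      using r\<^sub>0(1) by (metis symdiff_span_base symdiff_span_symdiff)
  qed
qed

lemma zprod_supp_subset: "zprod_supp xs \<subseteq> set xs"
  by (induction xs) (auto simp: symdiff_def)

lemma finite_zprod_supp: "finite (zprod_supp xs)"
  by (rule finite_subset[OF zprod_supp_subset]) simp

lemma even_card_Int_zprod_supp:
  "even (card (Y \<inter> zprod_supp xs)) \<longleftrightarrow> even (card {i. i < length xs \<and> xs ! i \<in> Y})"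
proof -
  have "even (card (Y \<inter> zprod_supp xs)) \<longleftrightarrow> even (length (filter (\<lambda>x. x \<in> Y) xs))"
  proof (induction xs)
    case (Cons x xs)
    have "finite (Y \<inter> zprod_supp xs)"
      using finite_zprod_supp by blast
    then show ?case
      using Cons.IH even_card_symdiff_iff[of "Y \<inter> {x}" "Y \<inter> zprod_supp xs"]
      by (cases "x \<in> Y") (auto simp: Int_symdiff_distrib)
  qed simp
  then show ?thesis
    by (simp add: length_filter_conv_card)
qed

section \<open>Walks and paths\<close>

lemma nat_crossing:
  assumes "P 0" "\<not> P n"
  shows "\<exists>i<n. P i \<and> \<not> P (Suc i)"
  using assms(2)
proof (induction n)
  case (Suc n)
  then show ?case
    by (cases "P n") (auto intro: less_SucI)
qed (use assms(1) in simp)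

lemma last_notin_butlast: "distinct xs \<Longrightarrow> xs \<noteq> [] \<Longrightarrow> last xs \<notin> set (butlast xs)"
  by (metis append_butlast_last_id distinct_append disjoint_iff list.set_intros(1))

lemma card_set_filter_nth:
  "distinct es \<Longrightarrow> card {a \<in> set es. P a} = card {i. i < length es \<and> P (es ! i)}"
  by (metis distinct_card distinct_filter length_filter_conv_card set_filter)

lemma rtrancl_path_nth:
  "rtrancl_path r x xs y \<Longrightarrow> i < length xs \<Longrightarrow> r ((x # xs) ! i) (xs ! i)"
proof (induction arbitrary: i rule: rtrancl_path.induct)
  case (step x y ys z)
  then show ?case
    by (cases i) auto
qed simp

lemma rtrancl_path_last: "rtrancl_path r x xs y \<Longrightarrow> last (x # xs) = y"
  by (induction rule: rtrancl_path.induct) auto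

lemma rtranclp_distinct_walk:
  assumes "r\<^sup>*\<^sup>* x y"
  obtains us where "us \<noteq> []" "hd us = x" "last us = y" "distinct us"
    "\<And>i. Suc i < length us \<Longrightarrow> r (us ! i) (us ! Suc i)"
proof -
  obtain xs where "rtrancl_path r x xs y" "distinct (x # xs)"
    using assms rtrancl_path_distinct by (metis rtranclp_eq_rtrancl_path)
  then show thesis
    using that[of "x # xs"] rtrancl_path_nth rtrancl_path_last by fastforce
qed

lemma rtranclp_crossing:
  assumes "r\<^sup>*\<^sup>* a b" "P a" "\<not> P b"
  obtains x y where "r x y" "P x" "\<not> P y"
  using assms by (induction rule: rtranclp_induct) blast+

definition closed_chain_ends :: "'a list \<Rightarrow> nat \<Rightarrow> 'a set" where
  "closed_chain_ends xs i = {xs ! i, xs ! (Suc i mod length xs)}"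

text \<open>The \<open>i\<close>-th edge of the open path through the vertices \<open>xs\<close>, \<open>0 \<le> i \<le> length xs\<close>,
  joins those of \<open>xs ! (i - 1)\<close> and \<open>xs ! i\<close> that exist; the first and last edges are
  partial.\<close>

definition open_chain_ends :: "'a list \<Rightarrow> nat \<Rightarrow> 'a set" where
  "open_chain_ends xs i = {xs ! j |j. j < length xs \<and> (j = i \<or> Suc j = i)}"

lemma closed_chain_incidences:
  assumes "distinct xs" "2 \<le> length xs"
  shows "card {i. i < length xs \<and> x \<in> closed_chain_ends xs i} \<in> {0, 2}"
proof (cases "x \<in> set xs")
  case True
  define n where "n = length xs"
  obtain j where j: "j < n" "xs ! j = x"
    using True by (auto simp: in_set_conv_nth n_def)
  define k where "k = (if j = 0 then n - 1 else j - 1)"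
  have index: "xs ! l = x \<longleftrightarrow> l = j" if "l < n" for l
    using that j assms(1) by (auto simp: n_def nth_eq_iff_index_eq)
  have "Suc i mod n = j \<longleftrightarrow> i = k" if "i < n" for i
    using that j by (auto simp: k_def mod_Suc)
  moreover have "Suc i mod n < n" for i
    using assms(2) unfolding n_def by (intro mod_less_divisor) linarith
  moreover have "x \<in> closed_chain_ends xs i \<longleftrightarrow> xs ! i = x \<or> xs ! (Suc i mod n) = x" for i
    by (auto simp: closed_chain_ends_def n_def)
  ultimately have "x \<in> closed_chain_ends xs i \<longleftrightarrow> i = j \<or> i = k" if "i < n" for i
    using that index by metis
  moreover have "k < n"
    using j by (auto simp: k_def)
  ultimately have "{i. i < n \<and> x \<in> closed_chain_ends xs i} = {j, k}"
    using j(1) by blast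
  moreover have "j \<noteq> k"
    using j assms(2) by (auto simp: k_def n_def)
  ultimately show ?thesis
    by (simp add: n_def)
next
  case False
  have "closed_chain_ends xs i \<subseteq> set xs" if "i < length xs" for i
    using that by (auto simp: closed_chain_ends_def intro!: nth_mem mod_less_divisor)
  then show ?thesis
    using False by auto
qed

lemma closed_chain_ends_card:
  assumes "distinct xs" "2 \<le> length xs" "i < length xs"
  shows "card (closed_chain_ends xs i) = 2"
proof -
  have "i \<noteq> Suc i mod length xs" "Suc i mod length xs < length xs"
    using assms(2,3) by (auto simp: mod_Suc)
  then show ?thesis
    using assms by (simp add: closed_chain_ends_def nth_eq_iff_index_eq)
qed

lemma open_chain_incidences:
  assumes "distinct xs"
  shows "card {i. i \<le> length xs \<and> x \<in> open_chain_ends xs i} \<in> {0, 2}"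
proof (cases "x \<in> set xs")
  case True
  obtain j where j: "j < length xs" "xs ! j = x"
    using True by (auto simp: in_set_conv_nth)
  have "{i. i \<le> length xs \<and> x \<in> open_chain_ends xs i} = {j, Suc j}"
    using j assms by (auto simp: open_chain_ends_def nth_eq_iff_index_eq)
  then show ?thesis
    by simp
qed (auto simp: open_chain_ends_def)

lemma open_chain_ends_first: "xs \<noteq> [] \<Longrightarrow> open_chain_ends xs 0 = {xs ! 0}"
  by (auto simp: open_chain_ends_def)

lemma open_chain_ends_last: "xs \<noteq> [] \<Longrightarrow> open_chain_ends xs (length xs) = {last xs}"
  by (auto simp: open_chain_ends_def last_conv_nth) (metis diff_Suc_1')

lemma open_chain_ends_inner:
  "0 < i \<Longrightarrow> i < length xs \<Longrightarrow> open_chain_ends xs i = {xs ! (i - 1), xs ! i}"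
  by (auto simp: open_chain_ends_def)

lemma open_chain_partial_edges:
  assumes "distinct xs" "xs \<noteq> []"
  shows "{i. i \<le> length xs \<and> card (open_chain_ends xs i) = 1} = {0, length xs}"
proof -
  have "card (open_chain_ends xs i) = 2" if "0 < i" "i < length xs" for i
    using that assms(1) by (simp add: open_chain_ends_inner nth_eq_iff_index_eq)
  then show ?thesis
    using assms(2) by (auto simp: open_chain_ends_first open_chain_ends_last le_less)
qed

lemma open_partial_path_ends:
  assumes "is_open_partial_path endp es"
  obtains xs where "Suc (length xs) = length es" "distinct xs"
    "\<And>i. i < length es \<Longrightarrow> endp (es ! i) = open_chain_ends xs i"
proof -
  obtain xs where xs: "length es \<ge> 2" "Suc (length xs) = length es" "distinct xs"
    "endp (es ! 0) = {xs ! 0}" "endp (last es) = {last xs}"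
    "\<And>i. 0 < i \<and> Suc i < length es \<Longrightarrow> endp (es ! i) = {xs ! (i - 1), xs ! i}"
    using assms unfolding is_open_partial_path_def by blast
  have ne: "xs \<noteq> []" "es \<noteq> []"
    using xs(1,2) by auto
  have "endp (es ! i) = open_chain_ends xs i" if i: "i < length es" for i
  proof -
    consider "i = 0" | "i = length xs" | "0 < i" "i < length xs"
      using i xs(2) by (cases "i = 0"; cases "i = length xs") auto
    then show ?thesis
    proof cases
      case 2
      then have "es ! i = last es"
        using xs(2) ne(2) by (simp add: last_conv_nth flip: xs(2))
      then show ?thesis
        using 2 xs(5) ne(1) by (simp add: open_chain_ends_last)
    qed (use xs ne in \<open>auto simp: open_chain_ends_first open_chain_ends_inner\<close>)
  qed
  then show thesis
    using that xs(2,3) by blast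
qed

lemma boundary_path_incidences:
  assumes "boundary_is_path endp S"
  shows "card {a \<in> S. x \<in> endp a} \<in> {0, 2}"
proof -
  obtain es where es: "set es = S" "is_closed_path endp es \<or> is_open_partial_path endp es"
    using assms unfolding boundary_is_path_def by blast
  then have "distinct es"
    by (auto simp: is_closed_path_def is_open_partial_path_def)
  then have count: "card {a \<in> S. x \<in> endp a} = card {i. i < length es \<and> x \<in> endp (es ! i)}"
    using card_set_filter_nth[of es "\<lambda>a. x \<in> endp a"] es(1) by simp
  from es(2) show ?thesis
  proof
    assume "is_closed_path endp es"
    then obtain xs where "length xs = length es" "distinct xs" "2 \<le> length xs"
      "\<And>i. i < length es \<Longrightarrow> endp (es ! i) = closed_chain_ends xs i"
      by (auto simp: is_closed_path_def closed_chain_ends_def)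
    then have "{i. i < length es \<and> x \<in> endp (es ! i)} =
        {i. i < length xs \<and> x \<in> closed_chain_ends xs i}"
      by auto
    then show ?thesis
      using count closed_chain_incidences[of xs x] \<open>distinct xs\<close> \<open>2 \<le> length xs\<close> by simp
  next
    assume "is_open_partial_path endp es"
    then obtain xs where "Suc (length xs) = length es" "distinct xs"
      "\<And>i. i < length es \<Longrightarrow> endp (es ! i) = open_chain_ends xs i"
      by (metis open_partial_path_ends)
    then have "{i. i < length es \<and> x \<in> endp (es ! i)} =
        {i. i \<le> length xs \<and> x \<in> open_chain_ends xs i}"
      by auto
    then show ?thesis
      using count open_chain_incidences[OF \<open>distinct xs\<close>] by simp
  qed
qed

lemma boundary_path_partial_edges:
  assumes "boundary_is_path endp S"
  shows "card {a \<in> S. card (endp a) = 1} \<in> {0, 2}"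
proof -
  obtain es where es: "set es = S" "is_closed_path endp es \<or> is_open_partial_path endp es"
    using assms unfolding boundary_is_path_def by blast
  then have "distinct es" "2 \<le> length es"
    by (auto simp: is_closed_path_def is_open_partial_path_def)
  then have count:
      "card {a \<in> S. card (endp a) = 1} = card {i. i < length es \<and> card (endp (es ! i)) = 1}"
    using card_set_filter_nth[of es "\<lambda>a. card (endp a) = 1"] es(1) by simp
  from es(2) show ?thesis
  proof
    assume "is_closed_path endp es"
    then obtain xs where "length xs = length es" "distinct xs" "2 \<le> length xs"
      "\<And>i. i < length es \<Longrightarrow> endp (es ! i) = closed_chain_ends xs i"
      by (auto simp: is_closed_path_def closed_chain_ends_def)
    then have "{i. i < length es \<and> card (endp (es ! i)) = 1} = {}"
      using closed_chain_ends_card[of xs] by auto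
    then show ?thesis
      using count by simp
  next
    assume "is_open_partial_path endp es"
    then obtain xs where xs: "Suc (length xs) = length es" "distinct xs"
      "\<And>i. i < length es \<Longrightarrow> endp (es ! i) = open_chain_ends xs i"
      by (metis open_partial_path_ends)
    have "xs \<noteq> []"
      using xs(1) \<open>2 \<le> length es\<close> by auto
    have "{i. i < length es \<and> card (endp (es ! i)) = 1} =
        {i. i \<le> length xs \<and> card (open_chain_ends xs i) = 1}"
      using xs(1,3) by (intro Collect_cong) (auto simp flip: xs(1))
    also have "\<dots> = {0, length xs}"
      by (rule open_chain_partial_edges[OF xs(2) \<open>xs \<noteq> []\<close>])
    finally show ?thesis
      using count \<open>xs \<noteq> []\<close> by simp
  qed
qed

definition closed_faces :: "('x, 'e, 'f, 'v) complex3 \<Rightarrow> 'f set \<Rightarrow> bool" where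
  "closed_faces G S \<longleftrightarrow> (\<forall>e\<in>edges G. even (card (iota_e G e \<inter> S)))"

lemma iota_e_subset_faces: "iota_e G e \<subseteq> faces G"
  by (auto simp: iota_e_def)

lemma bd_faces_conv_iota_e:
  assumes "S \<subseteq> faces G"
  shows "bd_faces G S = {e \<in> edges G. odd (card (iota_e G e \<inter> S))}"
proof -
  have "{f \<in> S. e \<in> bdf G f} = iota_e G e \<inter> S" for e
    using assms by (auto simp: iota_e_def)
  then show ?thesis
    by (simp add: bd_faces_def)
qed

lemma bd_faces_eq_empty_iff: "S \<subseteq> faces G \<Longrightarrow> bd_faces G S = {} \<longleftrightarrow> closed_faces G S"
  by (auto simp: bd_faces_conv_iota_e closed_faces_def)

lemma bd_faces_symdiff:
  assumes "finite S" "finite T"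
  shows "bd_faces G (symdiff S T) = symdiff (bd_faces G S) (bd_faces G T)"
proof -
  have "odd (card {f \<in> symdiff S T. e \<in> bdf G f}) \<longleftrightarrow>
      \<not> (odd (card {f \<in> S. e \<in> bdf G f}) \<longleftrightarrow> odd (card {f \<in> T. e \<in> bdf G f}))" for e
  proof -
    have "{f \<in> symdiff S T. e \<in> bdf G f} = symdiff {f \<in> S. e \<in> bdf G f} {f \<in> T. e \<in> bdf G f}"
      by (auto simp: symdiff_def)
    then show ?thesis
      using assms even_card_symdiff_iff[of "{f \<in> S. e \<in> bdf G f}" "{f \<in> T. e \<in> bdf G f}"] by simp
  qed
  then show ?thesis
    by (auto simp: bd_faces_def symdiff_def)
qed

lemma closed_faces_symdiff:
  assumes "finite (faces G)" "closed_faces G A" "closed_faces G B"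
  shows "closed_faces G (symdiff A B)"
  unfolding closed_faces_def
proof
  fix e assume "e \<in> edges G"
  show "even (card (iota_e G e \<inter> symdiff A B))"
    using assms(2,3) \<open>e \<in> edges G\<close> finite_subset[OF iota_e_subset_faces assms(1)]
    by (simp add: closed_faces_def even_card_Int_symdiff)
qed

lemma closed_faces_symdiff_sum:
  assumes "finite (faces G)" "finite W" "\<And>w. w \<in> W \<Longrightarrow> closed_faces G (g w)"
  shows "closed_faces G (symdiff_sum g W)"
  unfolding closed_faces_def
proof
  fix e assume "e \<in> edges G"
  then show "even (card (iota_e G e \<inter> symdiff_sum g W))"
    using assms(2,3) finite_subset[OF iota_e_subset_faces assms(1)]
    by (simp add: closed_faces_def even_card_Int_symdiff_sum)
qed

definition boundary_spanned :: "('x, 'e, 'f, 'v) complex3 \<Rightarrow> 'f set \<Rightarrow> 'f \<Rightarrow> bool" where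
  "boundary_spanned G E f \<longleftrightarrow> (\<exists>T\<subseteq>E. bd_faces G {f} = bd_faces G T)"

lemma boundary_spanned_mono: "boundary_spanned G E f \<Longrightarrow> E \<subseteq> E' \<Longrightarrow> boundary_spanned G E' f"
  unfolding boundary_spanned_def by blast

lemma bd_faces_spanned:
  assumes "finite (faces G)" "E \<subseteq> faces G" "F \<subseteq> faces G" "\<And>f. f \<in> F \<Longrightarrow> boundary_spanned G E f"
  shows "\<exists>T\<subseteq>E. bd_faces G F = bd_faces G T"
proof -
  have fin: "finite T" if "T \<subseteq> E" for T
    using finite_subset[OF subset_trans[OF that assms(2)] assms(1)] .
  have "finite F"
    using finite_subset[OF assms(3,1)] .
  then show ?thesis
    using assms(3,4)
  proof (induction F rule: finite_induct)
    case empty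
    then show ?case
      by (auto simp: bd_faces_def)
  next
    case (insert f F)
    obtain T\<^sub>1 where "T\<^sub>1 \<subseteq> E" "bd_faces G F = bd_faces G T\<^sub>1"
      using insert.IH insert.prems by blast
    moreover obtain T\<^sub>2 where "T\<^sub>2 \<subseteq> E" "bd_faces G {f} = bd_faces G T\<^sub>2"
      using insert.prems(2)[of f] by (auto simp: boundary_spanned_def)
    ultimately have T: "T\<^sub>1 \<subseteq> E" "bd_faces G F = bd_faces G T\<^sub>1"
      "T\<^sub>2 \<subseteq> E" "bd_faces G {f} = bd_faces G T\<^sub>2"
      by blast+
    have "insert f F = symdiff {f} F"
      using insert.hyps(2) by (auto simp: symdiff_def)
    then have "bd_faces G (insert f F) = symdiff (bd_faces G {f}) (bd_faces G F)"
      using bd_faces_symdiff[of "{f}" F G] insert.hyps(1) by simp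
    also have "\<dots> = bd_faces G (symdiff T\<^sub>2 T\<^sub>1)"
      using T bd_faces_symdiff[of T\<^sub>2 T\<^sub>1 G] fin by simp
    finally show ?case
      using T(1,3) symdiff_subset[of T\<^sub>2 E T\<^sub>1] by blast
  qed
qed

lemma stab_group_snd_in_span: "p \<in> stab_group G \<Longrightarrow> snd p \<in> symdiff_span (iota_e G ` edges G)"
  by (induction rule: stab_group.induct) (auto simp: pmult_def intro: symdiff_span.intros)

lemma stab_group_if_in_span: "z \<in> symdiff_span (iota_e G ` edges G) \<Longrightarrow> ({}, z) \<in> stab_group G"
proof (induction rule: symdiff_span.induct)
  case (symdiff_span_step r x)
  then obtain e where "e \<in> edges G" "r = iota_e G e"
    by blast
  then show ?case
    using stab_B[OF _ symdiff_span_step.IH] by (simp add: pmult_def)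
qed (rule stab_id)

lemma face_path_hd_last:
  assumes "face_path W bd F fs vs"
  shows "hd fs = fs ! 0" "last fs = fs ! length vs"
proof -
  have "fs \<noteq> []" "length fs = Suc (length vs)"
    using assms by (auto simp: face_path_def)
  then show "hd fs = fs ! 0" "last fs = fs ! length vs"
    by (simp_all add: hd_conv_nth last_conv_nth)
qed

lemma face_path_ends_between:
  assumes fp: "face_path W bd F fs vs" and ends: "hd fs \<in> bd \<nu>" "last fs \<in> bd \<nu>'"
    and "i < length fs"
  shows "fs ! i \<in> bd ((\<nu> # vs @ [\<nu>']) ! i)" "fs ! i \<in> bd ((\<nu> # vs @ [\<nu>']) ! Suc i)"
proof -
  have len: "length fs = Suc (length vs)"
    using fp by (simp add: face_path_def)
  have inner: "fs ! j \<in> bd (vs ! j) \<and> fs ! Suc j \<in> bd (vs ! j)" if "j < length vs" for j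
    using fp that by (simp add: face_path_def)
  show "fs ! i \<in> bd ((\<nu> # vs @ [\<nu>']) ! i)"
  proof (cases i)
    case 0
    then show ?thesis
      using ends(1) face_path_hd_last[OF fp] by simp
  next
    case (Suc j)
    then show ?thesis
      using inner[of j] \<open>i < length fs\<close> len by (simp add: nth_append)
  qed
  show "fs ! i \<in> bd ((\<nu> # vs @ [\<nu>']) ! Suc i)"
  proof (cases "i < length vs")
    case True
    then show ?thesis
      using inner[of i] by (simp add: nth_append)
  next
    case False
    then have "i = length vs"
      using \<open>i < length fs\<close> len by simp
    then show ?thesis
      using ends(2) face_path_hd_last[OF fp] by simp
  qed
qed

lemma walk_face_path:
  assumes us: "2 \<le> length us" "distinct us" "set us \<subseteq> W"
    and step: "\<And>i. Suc i < length us \<Longrightarrow> \<exists>h\<in>F. h \<in> bd (us ! i) \<and> h \<in> bd (us ! Suc i)"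
  obtains fs
  where "face_path W bd F fs (butlast (tl us))" "hd fs \<in> bd (hd us)" "last fs \<in> bd (last us)"
proof -
  define k where "k = length us - 1"
  define h where "h i = (SOME h. h \<in> F \<and> h \<in> bd (us ! i) \<and> h \<in> bd (us ! Suc i))" for i
  have "h i \<in> F \<and> h i \<in> bd (us ! i) \<and> h i \<in> bd (us ! Suc i)" if "i < k" for i
  proof -
    have "Suc i < length us"
      using that by (simp add: k_def)
    then obtain h\<^sub>0 where "h\<^sub>0 \<in> F \<and> h\<^sub>0 \<in> bd (us ! i) \<and> h\<^sub>0 \<in> bd (us ! Suc i)"
      using step by blast
    then show ?thesis
      unfolding h_def by (rule someI)
  qed
  then have h: "h i \<in> F" "h i \<in> bd (us ! i)" "h i \<in> bd (us ! Suc i)" if "i < k" for i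
    using that by blast+
  define fs where "fs = map h [0..<k]"
  have k: "0 < k" "length (butlast (tl us)) = k - 1"
    using us(1) by (auto simp: k_def)
  have vs_nth: "butlast (tl us) ! i = us ! Suc i" if "i < k - 1" for i
    using that us(1) by (simp add: k_def nth_butlast nth_tl)
  have "us \<noteq> []" "Suc (k - 1) = length us - 1"
    using us(1) by (auto simp: k_def)
  then have ends: "us ! 0 = hd us" "us ! Suc (k - 1) = last us"
    by (simp_all add: hd_conv_nth last_conv_nth)
  have "set (butlast (tl us)) \<subseteq> set us"
    by (cases us) (auto dest: in_set_butlastD)
  moreover have "fs ! i \<in> bd (butlast (tl us) ! i) \<and> fs ! Suc i \<in> bd (butlast (tl us) ! i)"
    if "i < k - 1" for i
    using that h(3)[of i] h(2)[of "Suc i"] vs_nth[OF that] by (simp add: fs_def)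
  moreover have "length fs = Suc (length (butlast (tl us)))" "set fs \<subseteq> F"
    using k h(1) by (auto simp: fs_def)
  moreover have "distinct (butlast (tl us))"
    using us(2) by (simp add: distinct_butlast distinct_tl)
  ultimately have "face_path W bd F fs (butlast (tl us))"
    using us(3) k(2) unfolding face_path_def by auto
  moreover have "hd fs = h 0" "last fs = h (k - 1)"
    using k(1) by (simp_all add: fs_def hd_map last_map)
  moreover note ends
  ultimately show thesis
    using that h(2)[of 0] h(3)[of "k - 1"] k(1) by auto
qed

lemma calF_subset_faces: "calF G \<subseteq> faces G"
  by (auto simp: calF_def)

lemma mem_iota_f: "v \<in> iota_f G f \<longleftrightarrow> v \<in> vols G \<and> f \<in> bdv G v"
  by (simp add: iota_f_def)

lemma calF_iota_f: "f \<in> calF G \<Longrightarrow> \<exists>v. iota_f G f = {v}"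
  by (auto simp: calF_def card_1_singleton_iff)

lemma face_path_calF_index:
  assumes "face_path (vols G) (bdv G) F fs vs" "i < length fs" "fs ! i \<in> calF G"
  shows "i = 0 \<or> i = length vs"
proof (rule ccontr)
  assume "\<not> (i = 0 \<or> i = length vs)"
  then have i: "0 < i" "i < length vs"
    using assms(1,2) by (auto simp: face_path_def)
  then have "vs ! (i - 1) \<in> iota_f G (fs ! i)" "vs ! i \<in> iota_f G (fs ! i)"
    using assms(1) by (auto simp: face_path_def mem_iota_f) (metis Suc_pred less_imp_diff_less)
  moreover have "vs ! (i - 1) \<noteq> vs ! i"
    using assms(1) i by (simp add: face_path_def nth_eq_iff_index_eq)
  ultimately show False
    using assms(3) calF_iota_f by fastforce
qed

text \<open>The face classes of the augmented lattice turn out to be the connected components of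
  \<open>calF G\<close> under sharing an edge (\<open>face_classes_eq\<close>).\<close>

definition calF_adj :: "('x, 'e, 'f, 'v) complex3 \<Rightarrow> 'f \<Rightarrow> 'f \<Rightarrow> bool" where
  "calF_adj G a b \<longleftrightarrow> a \<in> calF G \<and> b \<in> calF G \<and> (\<exists>e\<in>edges G. a \<in> iota_e G e \<and> b \<in> iota_e G e)"

definition calF_component :: "('x, 'e, 'f, 'v) complex3 \<Rightarrow> 'f \<Rightarrow> 'f set" where
  "calF_component G f = {g \<in> calF G. (calF_adj G)\<^sup>*\<^sup>* f g}"

lemma symp_calF_adj: "symp (calF_adj G)"
  by (auto simp: symp_def calF_adj_def)

lemma calF_component_subset: "calF_component G f \<subseteq> calF G"
  by (auto simp: calF_component_def)

lemma self_in_calF_component: "f \<in> calF G \<Longrightarrow> f \<in> calF_component G f"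
  by (simp add: calF_component_def)

lemma calF_component_eq:
  assumes "g \<in> calF_component G f"
  shows "calF_component G g = calF_component G f"
proof -
  have "(calF_adj G)\<^sup>*\<^sup>* f g" "(calF_adj G)\<^sup>*\<^sup>* g f"
    using assms sympD[OF symp_rtranclp[OF symp_calF_adj]] by (auto simp: calF_component_def)
  then have "(calF_adj G)\<^sup>*\<^sup>* g h \<longleftrightarrow> (calF_adj G)\<^sup>*\<^sup>* f h" for h
    using rtranclp_trans by metis
  then show ?thesis
    by (simp add: calF_component_def)
qed

lemma dual_walk_faces:
  assumes f: "iota_f G f = {hd us}" "f \<in> faces G" and g: "iota_f G g = {last us}" "g \<in> faces G"
    and us: "us \<noteq> []" "\<And>i. Suc i < length us \<Longrightarrow> \<exists>h\<in>faces G. iota_f G h = {us ! i, us ! Suc i}"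
  obtains fs where "length fs = Suc (length us)" "set fs \<subseteq> faces G" "hd fs = f" "last fs = g"
    "\<And>i. i < length fs \<Longrightarrow> iota_f G (fs ! i) = open_chain_ends us i"
proof -
  define m where "m = length us"
  define h where "h i = (SOME h. h \<in> faces G \<and> iota_f G h = {us ! i, us ! Suc i})" for i
  have "h i \<in> faces G \<and> iota_f G (h i) = {us ! i, us ! Suc i}" if "Suc i < m" for i
    unfolding h_def by (rule someI_ex) (use us(2) that in \<open>auto simp: m_def\<close>)
  then have h: "h i \<in> faces G" "iota_f G (h i) = {us ! i, us ! Suc i}" if "Suc i < m" for i
    using that by blast+
  define fs where "fs = f # map h [0..<m - 1] @ [g]"
  have len: "length fs = Suc m"
    using us(1) by (simp add: fs_def m_def)
  have nth_fs: "fs ! i = h (i - 1)" if "0 < i" "i < m" for i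
    using that by (auto simp: fs_def nth_append nth_Cons')
  have incidence: "iota_f G (fs ! i) = open_chain_ends us i" if i: "i < length fs" for i
  proof -
    consider "i = 0" | "i = m" | "0 < i" "i < m"
      using i len by (cases "i = 0"; cases "i = m") auto
    then show ?thesis
    proof cases
      case 1
      then show ?thesis
        using f(1) us(1) by (simp add: fs_def open_chain_ends_first hd_conv_nth)
    next
      case 2
      then show ?thesis
        using g(1) us(1) by (simp add: fs_def m_def nth_append open_chain_ends_last)
    next
      case 3
      then show ?thesis
        using h[of "i - 1"] nth_fs by (simp add: open_chain_ends_inner m_def)
    qed
  qed
  show thesis
  proof (rule that)
    show "length fs = Suc (length us)"
      using len by (simp add: m_def)
    show "set fs \<subseteq> faces G"
      using f(2) g(2) h(1) by (auto simp: fs_def)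
    show "hd fs = f" "last fs = g"
      by (simp_all add: fs_def)
  qed (use incidence in blast)
qed

lemma dual_chain_face_path:
  assumes "length fs = Suc (length us)" "distinct us" "set fs \<subseteq> faces G"
    "\<And>i. i < length fs \<Longrightarrow> iota_f G (fs ! i) = open_chain_ends us i"
  shows "face_path (vols G) (bdv G) (faces G) fs us"
proof -
  have "us ! i \<in> open_chain_ends us i" "us ! i \<in> open_chain_ends us (Suc i)"
    if "i < length us" for i
    using that unfolding open_chain_ends_def by blast+
  then have "us ! i \<in> iota_f G (fs ! i) \<and> us ! i \<in> iota_f G (fs ! Suc i)" if "i < length us" for i
    using that assms(1,4) by simp
  then have "us ! i \<in> vols G \<and> fs ! i \<in> bdv G (us ! i) \<and> fs ! Suc i \<in> bdv G (us ! i)"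
    if "i < length us" for i
    using that by (simp add: mem_iota_f)
  then show ?thesis
    using assms(1-3) unfolding face_path_def by (metis in_set_conv_nth subsetI)
qed

lemma even_card_bdv_Int_zprod_supp_dual_chain:
  assumes "length fs = Suc (length us)" "distinct us" "v \<in> vols G"
    "\<And>i. i < length fs \<Longrightarrow> iota_f G (fs ! i) = open_chain_ends us i"
  shows "even (card (bdv G v \<inter> zprod_supp fs))"
proof -
  have "fs ! i \<in> bdv G v \<longleftrightarrow> v \<in> open_chain_ends us i" if "i < length fs" for i
  proof -
    have "v \<in> iota_f G (fs ! i) \<longleftrightarrow> fs ! i \<in> bdv G v"
      using assms(3) by (simp add: mem_iota_f)
    then show ?thesis
      using assms(4)[OF that] by simp
  qed
  then have "{i. i < length fs \<and> fs ! i \<in> bdv G v} = {i. i \<le> length us \<and> v \<in> open_chain_ends us i}"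
    using assms(1) by (auto simp: less_Suc_eq_le)
  then have "even (card {i. i < length fs \<and> fs ! i \<in> bdv G v})"
    using open_chain_incidences[OF assms(2), of v]
    by (metis even_zero even_numeral insertE singletonD)
  then show ?thesis
    by (simp only: even_card_Int_zprod_supp)
qed

text \<open>By (L1), every closed set of faces arises in this way.\<close>

definition aug_boundary :: "('x, 'e, 'f, 'v) complex3 \<Rightarrow> ('v + 'f set) set \<Rightarrow> 'f set" where
  "aug_boundary G W = {h \<in> faces G. odd (card {w \<in> W. h \<in> aug_bd G w})}"

definition aug_adj ::
    "('x, 'e, 'f, 'v) complex3 \<Rightarrow> 'f set \<Rightarrow> ('v + 'f set) \<Rightarrow> ('v + 'f set) \<Rightarrow> bool" where
  "aug_adj G K a b \<longleftrightarrow> a \<in> aug_vols G \<and> b \<in> aug_vols G \<and>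
     (\<exists>h\<in>faces G - K. h \<in> aug_bd G a \<and> h \<in> aug_bd G b)"

lemma symp_aug_adj: "symp (aug_adj G K)"
  by (auto simp: symp_def aug_adj_def)

lemma aug_adj_face_path:
  assumes "(aug_adj G K)\<^sup>*\<^sup>* \<nu> \<nu>'" "\<nu> \<noteq> \<nu>'"
  obtains fs vs where "face_path (aug_vols G) (aug_bd G) (faces G) fs vs" "set fs \<inter> K = {}"
    "hd fs \<in> aug_bd G \<nu>" "last fs \<in> aug_bd G \<nu>'" "\<nu> \<notin> set vs" "\<nu>' \<notin> set vs"
proof -
  obtain us where us: "us \<noteq> []" "hd us = \<nu>" "last us = \<nu>'" "distinct us"
    "\<And>i. Suc i < length us \<Longrightarrow> aug_adj G K (us ! i) (us ! Suc i)"
    using assms(1) by (rule rtranclp_distinct_walk) blast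
  have "2 \<le> length us"
    using us(1-3) assms(2) by (cases us) (auto simp: Suc_le_eq)
  moreover have "us ! j \<in> aug_vols G" if "j < length us" for j
  proof (cases "Suc j < length us")
    case False
    then have "Suc (j - 1) < length us" "Suc (j - 1) = j"
      using that \<open>2 \<le> length us\<close> by auto
    then show ?thesis
      using us(5)[of "j - 1"] by (auto simp: aug_adj_def)
  qed (use us(5) in \<open>auto simp: aug_adj_def\<close>)
  then have "set us \<subseteq> aug_vols G"
    by (auto simp: in_set_conv_nth)
  moreover have "\<exists>h\<in>faces G - K. h \<in> aug_bd G (us ! i) \<and> h \<in> aug_bd G (us ! Suc i)"
    if "Suc i < length us" for i
    using us(5)[OF that] by (auto simp: aug_adj_def)
  ultimately obtain fs
    where fs: "face_path (aug_vols G) (aug_bd G) (faces G - K) fs (butlast (tl us))"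
    "hd fs \<in> aug_bd G \<nu>" "last fs \<in> aug_bd G \<nu>'"
    using walk_face_path[of us "aug_vols G" "faces G - K" "aug_bd G"] us(2-4) by metis
  moreover have "\<nu> \<notin> set (butlast (tl us))"
    using us(1,2,4) by (cases us) (auto dest: in_set_butlastD)
  moreover have "\<nu>' \<notin> set (butlast (tl us))"
    using last_notin_butlast[OF us(4,1)] us(3) by (cases "butlast us") (auto simp: butlast_tl)
  moreover have "face_path (aug_vols G) (aug_bd G) (faces G) fs (butlast (tl us))" "set fs \<inter> K = {}"
    using fs(1) by (auto simp: face_path_def)
  ultimately show thesis
    using that by blast
qed

locale toric_lattice =
  fixes G :: "('x, 'e, 'f, 'v) complex3"
  assumes cell_complex: "cell_complex3 G"
    and L2_paths: "L2 G"
    and two_vols: "at_most_two_vols G"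
    and L1_no_interior_boundaries: "L1 G"
    and dual_conn: "dual_connected G"
begin

lemma finite_faces: "finite (faces G)" and finite_vols: "finite (vols G)"
  using cell_complex by (auto simp: cell_complex3_def)

lemma finite_iota_e: "finite (iota_e G e)"
  by (rule finite_subset[OF iota_e_subset_faces finite_faces])

lemma even_card_iota_e_Int_bdv:
  assumes "e \<in> edges G" "v \<in> vols G"
  shows "even (card (iota_e G e \<inter> bdv G v))"
proof -
  have "iota_e G e \<inter> bdv G v = {f \<in> iota_e G e. v \<in> iota_f G f}"
    using assms(2) by (auto simp: mem_iota_f)
  then show ?thesis
    using boundary_path_incidences[of "iota_f G" "iota_e G e" v] L2_paths assms(1)
    by (auto simp: L2_def)
qed

lemma closed_faces_bdv: "v \<in> vols G \<Longrightarrow> closed_faces G (bdv G v)"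
  by (simp add: closed_faces_def even_card_iota_e_Int_bdv)

lemma card_iota_e_Int_calF: "e \<in> edges G \<Longrightarrow> card (iota_e G e \<inter> calF G) \<in> {0, 2}"
proof -
  assume "e \<in> edges G"
  moreover have "iota_e G e \<inter> calF G = {f \<in> iota_e G e. card (iota_f G f) = 1}"
    using iota_e_subset_faces[of G e] by (auto simp: calF_def)
  ultimately show ?thesis
    using boundary_path_partial_edges[of "iota_f G" "iota_e G e"] L2_paths by (simp add: L2_def)
qed

lemma calF_adj_edge:
  assumes "calF_adj G a b" "a \<noteq> b"
  obtains e where "e \<in> edges G" "iota_e G e \<inter> calF G = {a, b}"
proof -
  obtain e where e: "e \<in> edges G" "{a, b} \<subseteq> iota_e G e \<inter> calF G"
    using assms(1) by (auto simp: calF_adj_def)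
  then have "card (iota_e G e \<inter> calF G) = 2"
    using card_iota_e_Int_calF[OF e(1)] finite_iota_e by (auto simp: card_gt_0_iff)
  moreover have "card {a, b} = 2"
    using assms(2) by simp
  ultimately have "iota_e G e \<inter> calF G = {a, b}"
    using e(2) finite_iota_e by (intro card_subset_eq[symmetric]) auto
  then show thesis
    using that e(1) by blast
qed

lemma closed_calF_subset_rtranclp:
  assumes "(calF_adj G)\<^sup>*\<^sup>* a b" "closed_faces G X" "X \<subseteq> calF G" "a \<in> X"
  shows "b \<in> X"
  using assms(1,4)
proof (induction rule: rtranclp_induct)
  case (step b c)
  show ?case
  proof (rule ccontr)
    assume "c \<notin> X"
    then obtain e where e: "e \<in> edges G" "iota_e G e \<inter> calF G = {b, c}"
      using calF_adj_edge step by blast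
    then have "iota_e G e \<inter> X = {b}"
      using assms(3) step.IH \<open>c \<notin> X\<close> step.prems by auto
    then show False
      using assms(2) e(1) by (auto simp: closed_faces_def)
  qed
qed

lemma closed_faces_calF_component: "closed_faces G (calF_component G f)"
  unfolding closed_faces_def
proof
  fix e assume e: "e \<in> edges G"
  have sub: "iota_e G e \<inter> calF_component G f = iota_e G e \<inter> calF G \<inter> calF_component G f"
    using calF_component_subset[of G f] by blast
  from card_iota_e_Int_calF[OF e] show "even (card (iota_e G e \<inter> calF_component G f))"
  proof
    assume "card (iota_e G e \<inter> calF G) = 0"
    then show ?thesis
      using sub finite_iota_e by simp
  next
    assume "card (iota_e G e \<inter> calF G) \<in> {2}"
    then obtain a b where ab: "a \<noteq> b" "iota_e G e \<inter> calF G = {a, b}"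
      by (auto simp: card_2_iff)
    then have "calF_adj G a b" "calF_adj G b a"
      using e by (auto simp: calF_adj_def)
    then have "a \<in> calF_component G f \<longleftrightarrow> b \<in> calF_component G f"
      using ab by (auto simp: calF_component_def intro: rtranclp.rtrancl_into_rtrancl)
    then show ?thesis
      using sub ab by (cases "a \<in> calF_component G f") (auto simp: Int_absorb2)
  qed
qed

section \<open>Face classes\<close>

lemma face_equiv_imp_calF_component:
  assumes "face_equiv G f g"
  shows "g \<in> calF_component G f"
proof (rule ccontr)
  let ?C = "calF_component G f"
  assume g: "g \<notin> ?C"
  have "f \<in> calF G" "g \<in> calF G"
    using assms by (auto simp: face_equiv_def)
  then have "f \<noteq> g"
    using g self_in_calF_component[of f G] by blast
  then obtain fs vs where fp: "face_path (vols G) (bdv G) (faces G) fs vs"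
    and ends: "hd fs = f" "last fs = g" and stab: "({}, zprod_supp fs) \<in> stab_group G"
    using assms by (auto simp: face_equiv_def)
  have "finite ?C"
    using finite_subset[OF calF_component_subset finite_subset[OF calF_subset_faces finite_faces]] .
  moreover have "even (card (?C \<inter> r))" if "r \<in> iota_e G ` edges G" for r
    using that closed_faces_calF_component by (auto simp: closed_faces_def Int_commute)
  ultimately have "even (card (?C \<inter> zprod_supp fs))"
    using even_card_Int_symdiff_span[of "zprod_supp fs" "iota_e G ` edges G" ?C]
      stab_group_snd_in_span[OF stab] by simp
  moreover have "{i. i < length fs \<and> fs ! i \<in> ?C} = {0}"
  proof -
    have "fs ! 0 = f" "fs ! length vs = g"
      using face_path_hd_last[OF fp] ends by simp_all
    moreover have "i = 0 \<or> i = length vs" if "i < length fs" "fs ! i \<in> ?C" for i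
      using face_path_calF_index[OF fp that(1)] that(2) calF_component_subset[of G f] by blast
    moreover have "0 < length fs"
      using fp by (simp add: face_path_def)
    ultimately show ?thesis
      using g self_in_calF_component[OF \<open>f \<in> calF G\<close>] by auto
  qed
  ultimately show False
    by (simp add: even_card_Int_zprod_supp)
qed

lemma finite_aug_vols: "finite (aug_vols G)"
proof -
  have "face_classes G \<subseteq> Pow (faces G)"
    by (auto simp: face_classes_def calF_def)
  then show ?thesis
    using finite_faces finite_vols by (simp add: aug_vols_def finite_subset)
qed

lemma aug_bd_subset_faces:
  assumes "w \<in> aug_vols G"
  shows "aug_bd G w \<subseteq> faces G"
proof (cases w)
  case (Inl v)
  then have "v \<in> vols G"
    using assms by (auto simp: aug_vols_def)
  then show ?thesis
    using cell_complex Inl by (simp add: aug_bd_def cell_complex3_def)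
qed (use assms in \<open>auto simp: aug_vols_def aug_bd_def face_classes_def calF_def\<close>)

lemma aug_boundary_eq_symdiff_sum:
  "W \<subseteq> aug_vols G \<Longrightarrow> aug_boundary G W = symdiff_sum (aug_bd G) W"
  using aug_bd_subset_faces symdiff_sum_subset[of W "aug_bd G" "faces G"]
  by (auto simp: aug_boundary_def symdiff_sum_def)

lemma closed_faces_decomposition:
  assumes "D \<subseteq> faces G" "closed_faces G D"
  obtains W X where "W \<subseteq> Inl ` vols G" "X \<subseteq> calF G" "closed_faces G X"
    "D = symdiff (symdiff_sum (aug_bd G) W) X"
proof -
  have "bd_faces G D = {}"
    using assms bd_faces_eq_empty_iff by blast
  then obtain W\<^sub>0 where W\<^sub>0: "W\<^sub>0 \<subseteq> aug_vols G" "D = aug_boundary G W\<^sub>0"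
    using L1_no_interior_boundaries assms(1) unfolding L1_def aug_boundary_def by blast
  define W where "W = W\<^sub>0 \<inter> range Inl"
  define X where "X = symdiff_sum (aug_bd G) (W\<^sub>0 - range Inl)"
  have fin: "finite W" "finite (W\<^sub>0 - range Inl)"
    using finite_subset[OF W\<^sub>0(1) finite_aug_vols] by (auto simp: W_def)
  have D: "D = symdiff (symdiff_sum (aug_bd G) W) X"
    using W\<^sub>0 symdiff_sum_Un[OF fin, of "aug_bd G"]
    by (simp add: aug_boundary_eq_symdiff_sum W_def X_def Int_Diff_Un Int_Diff_disjoint)
  have W: "W \<subseteq> Inl ` vols G"
    using W\<^sub>0(1) by (auto simp: W_def aug_vols_def)
  have "closed_faces G (symdiff_sum (aug_bd G) W)"
    using W closed_faces_bdv
    by (intro closed_faces_symdiff_sum[OF finite_faces fin(1)]) (auto simp: aug_bd_def)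
  moreover have "X = symdiff D (symdiff_sum (aug_bd G) W)"
    using D by (auto simp: symdiff_def)
  ultimately have "closed_faces G X"
    using closed_faces_symdiff[OF finite_faces assms(2)] by simp
  moreover have "X \<subseteq> calF G"
    using W\<^sub>0(1)
    by (auto simp: X_def aug_vols_def aug_bd_def face_classes_def intro!: symdiff_sum_subset)
  ultimately show thesis
    using that W D by blast
qed

lemma even_card_closed_calF_Int_zprod_supp:
  assumes fp: "face_path (vols G) (bdv G) F fs vs" and "hd fs \<noteq> last fs"
    and "(calF_adj G)\<^sup>*\<^sup>* (hd fs) (last fs)" "closed_faces G X" "X \<subseteq> calF G"
  shows "even (card (X \<inter> zprod_supp fs))"
proof -
  have ends: "fs ! 0 = hd fs" "fs ! length vs = last fs" "0 \<noteq> length vs"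
    using face_path_hd_last[OF fp] assms(2) by auto
  have "(calF_adj G)\<^sup>*\<^sup>* (last fs) (hd fs)"
    by (rule sympD[OF symp_rtranclp[OF symp_calF_adj] assms(3)])
  then have "hd fs \<in> X \<longleftrightarrow> last fs \<in> X"
    using closed_calF_subset_rtranclp[OF assms(3) assms(4,5)]
      closed_calF_subset_rtranclp[OF _ assms(4,5)] by blast
  moreover have "i = 0 \<or> i = length vs" if "i < length fs" "fs ! i \<in> X" for i
    using face_path_calF_index[OF fp] that assms(5) by blast
  moreover have "length vs < length fs"
    using fp by (simp add: face_path_def)
  ultimately have "{i. i < length fs \<and> fs ! i \<in> X} = (if hd fs \<in> X then {0, length vs} else {})"
    unfolding ends(1,2)[symmetric] by auto
  then show ?thesis
    using ends(3) by (simp add: even_card_Int_zprod_supp)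
qed

lemma dual_chain_between_calF:
  assumes f: "f \<in> calF G" and g: "g \<in> calF G"
  obtains fs us where "length fs = Suc (length us)" "distinct us" "set fs \<subseteq> faces G"
    "hd fs = f" "last fs = g" "\<And>i. i < length fs \<Longrightarrow> iota_f G (fs ! i) = open_chain_ends us i"
proof -
  obtain u u' where u: "iota_f G f = {u}" "iota_f G g = {u'}"
    using calF_iota_f[OF f] calF_iota_f[OF g] by blast
  then have "u \<in> vols G" "u' \<in> vols G"
    by (auto simp: iota_f_def)
  let ?r = "\<lambda>x y. x \<in> vols G \<and> y \<in> vols G \<and> (\<exists>h\<in>faces G. iota_f G h = {x, y})"
  have "?r\<^sup>*\<^sup>* u u'"
    using dual_conn \<open>u \<in> vols G\<close> \<open>u' \<in> vols G\<close> unfolding dual_connected_def conn_def by blast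
  then obtain us where us: "us \<noteq> []" "hd us = u" "last us = u'" "distinct us"
    "\<And>i. Suc i < length us \<Longrightarrow> ?r (us ! i) (us ! Suc i)"
    by (rule rtranclp_distinct_walk) blast
  have "f \<in> faces G" "g \<in> faces G"
    using f g by (auto simp: calF_def)
  moreover have "iota_f G f = {hd us}" "iota_f G g = {last us}"
    using u us(2,3) by simp_all
  moreover have "\<exists>h\<in>faces G. iota_f G h = {us ! i, us ! Suc i}" if "Suc i < length us" for i
    using us(5)[OF that] by blast
  ultimately obtain fs where fs: "length fs = Suc (length us)" "set fs \<subseteq> faces G" "hd fs = f"
    "last fs = g" "\<And>i. i < length fs \<Longrightarrow> iota_f G (fs ! i) = open_chain_ends us i"
    using dual_walk_faces[of G f us g] us(1) by metis
  show thesis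
    using that[OF fs(1) us(4) fs(2-4) fs(5)] .
qed

text \<open>A dual chain between two faces of the same component meets every closed set of faces
  evenly: by (L1) such a set is a sum of volume boundaries, each met evenly by the chain, and
  a closed subset of \<open>calF G\<close> that contains both or neither end of the chain.\<close>

lemma even_card_closed_Int_zprod_supp:
  assumes fs: "length fs = Suc (length us)" "distinct us" "set fs \<subseteq> faces G"
    "\<And>i. i < length fs \<Longrightarrow> iota_f G (fs ! i) = open_chain_ends us i"
    and ends: "hd fs \<noteq> last fs" "(calF_adj G)\<^sup>*\<^sup>* (hd fs) (last fs)"
    and D: "D \<subseteq> faces G" "closed_faces G D"
  shows "even (card (D \<inter> zprod_supp fs))"
proof -
  have fp: "face_path (vols G) (bdv G) (faces G) fs us"
    using dual_chain_face_path[OF fs] .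
  obtain W X where W: "W \<subseteq> Inl ` vols G" and X: "X \<subseteq> calF G" "closed_faces G X"
    and D_eq: "D = symdiff (symdiff_sum (aug_bd G) W) X"
    using closed_faces_decomposition[OF D] by blast
  have "even (card (zprod_supp fs \<inter> symdiff_sum (aug_bd G) W))"
  proof (rule even_card_Int_symdiff_sum[OF finite_subset[OF W] finite_zprod_supp])
    fix w assume "w \<in> W"
    then obtain v where "w = Inl v" "v \<in> vols G"
      using W by blast
    then show "even (card (zprod_supp fs \<inter> aug_bd G w))"
      using even_card_bdv_Int_zprod_supp_dual_chain[OF fs(1,2) _ fs(4), of v]
      by (simp add: aug_bd_def Int_commute)
  qed (simp add: finite_vols)
  moreover have "even (card (X \<inter> zprod_supp fs))"
    by (rule even_card_closed_calF_Int_zprod_supp[OF fp ends X(2,1)])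
  ultimately have "even (card (zprod_supp fs \<inter> D))"
    unfolding D_eq by (simp add: Int_commute even_card_Int_symdiff[OF finite_zprod_supp])
  then show ?thesis
    by (simp add: Int_commute)
qed

lemma calF_component_imp_face_equiv:
  assumes f: "f \<in> calF G" and g: "g \<in> calF_component G f"
  shows "face_equiv G f g"
proof (cases "f = g")
  case True
  then show ?thesis
    using f by (simp add: face_equiv_def)
next
  case False
  have "g \<in> calF G" and adj: "(calF_adj G)\<^sup>*\<^sup>* f g"
    using g by (auto simp: calF_component_def)
  then obtain fs us where fs: "length fs = Suc (length us)" "distinct us" "set fs \<subseteq> faces G"
    "hd fs = f" "last fs = g" "\<And>i. i < length fs \<Longrightarrow> iota_f G (fs ! i) = open_chain_ends us i"
    using dual_chain_between_calF[OF f] by metis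
  have "zprod_supp fs \<in> symdiff_span (iota_e G ` edges G)"
  proof (rule symdiff_span_if_orthogonal[OF finite_faces])
    show "r \<subseteq> faces G" if "r \<in> iota_e G ` edges G" for r
      using that iota_e_subset_faces[of G] by blast
    show "zprod_supp fs \<subseteq> faces G"
      using zprod_supp_subset[of fs] fs(3) by blast
    show "even (card (D \<inter> zprod_supp fs))"
      if "D \<subseteq> faces G" "\<forall>r\<in>iota_e G ` edges G. even (card (D \<inter> r))" for D
      using that even_card_closed_Int_zprod_supp[OF fs(1-3,6)] fs(4,5) False adj
      by (simp add: closed_faces_def Int_commute)
  qed
  then have "({}, zprod_supp fs) \<in> stab_group G"
    by (rule stab_group_if_in_span)
  then show ?thesis
    unfolding face_equiv_def using f \<open>g \<in> calF G\<close> dual_chain_face_path[OF fs(1-3,6)] fs(4,5)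
    by blast
qed

lemma face_classes_eq: "face_classes G = calF_component G ` calF G"
proof -
  have "{g \<in> calF G. face_equiv G f g} = calF_component G f" if "f \<in> calF G" for f
    using that face_equiv_imp_calF_component calF_component_imp_face_equiv
      calF_component_subset[of G f] by blast
  then show ?thesis
    by (auto simp: face_classes_def)
qed

lemma aug_vols_containing:
  assumes "h \<in> faces G"
  shows "{w \<in> aug_vols G. h \<in> aug_bd G w} =
    Inl ` iota_f G h \<union> (if h \<in> calF G then {Inr (calF_component G h)} else {})"
proof -
  have inr: "Inr C \<in> aug_vols G \<and> h \<in> C \<longleftrightarrow> h \<in> calF G \<and> C = calF_component G h" for C
  proof
    assume "Inr C \<in> aug_vols G \<and> h \<in> C"
    then obtain f where "f \<in> calF G" "C = calF_component G f" "h \<in> C"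
      by (auto simp: aug_vols_def face_classes_eq)
    then show "h \<in> calF G \<and> C = calF_component G h"
      using calF_component_subset[of G f] calF_component_eq[of h G f] by blast
  next
    assume "h \<in> calF G \<and> C = calF_component G h"
    then show "Inr C \<in> aug_vols G \<and> h \<in> C"
      using self_in_calF_component[of h G] by (auto simp: aug_vols_def face_classes_eq)
  qed
  have inl: "Inl v \<in> aug_vols G \<and> h \<in> aug_bd G (Inl v) \<longleftrightarrow> v \<in> iota_f G h" for v
    by (auto simp: aug_vols_def aug_bd_def mem_iota_f)
  show ?thesis
  proof (intro set_eqI)
    fix w
    show "w \<in> {w \<in> aug_vols G. h \<in> aug_bd G w} \<longleftrightarrow>
      w \<in> Inl ` iota_f G h \<union> (if h \<in> calF G then {Inr (calF_component G h)} else {})"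
      by (cases w) (use inl inr in \<open>auto simp: aug_bd_def\<close>)
  qed
qed

lemma card_aug_vols_containing:
  assumes "h \<in> faces G"
  shows "card {w \<in> aug_vols G. h \<in> aug_bd G w} \<in> {0, 2}"
proof (cases "h \<in> calF G")
  case True
  then obtain v where "iota_f G h = {v}"
    using calF_iota_f[OF True] by blast
  then show ?thesis
    using aug_vols_containing[OF assms] True by simp
next
  case False
  have "card (iota_f G h) \<le> 2"
    using two_vols assms by (simp add: at_most_two_vols_def)
  moreover have "card (iota_f G h) \<noteq> 1"
    using False assms by (simp add: calF_def)
  moreover have "card (Inl ` iota_f G h :: ('v + 'f set) set) = card (iota_f G h)"
    by (simp add: card_image)
  ultimately show ?thesis
    using aug_vols_containing[OF assms] False by auto
qed

lemma aug_vols_containing_pair: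
  assumes "h \<in> faces G" "a \<in> aug_vols G" "b \<in> aug_vols G" "a \<noteq> b" "h \<in> aug_bd G a" "h \<in> aug_bd G b"
  shows "{w \<in> aug_vols G. h \<in> aug_bd G w} = {a, b}"
proof -
  let ?A = "{w \<in> aug_vols G. h \<in> aug_bd G w}"
  have "finite ?A" "{a, b} \<subseteq> ?A"
    using finite_aug_vols assms by auto
  moreover have "card ?A = 2"
    using card_aug_vols_containing[OF assms(1)] \<open>finite ?A\<close> \<open>{a, b} \<subseteq> ?A\<close> by auto
  ultimately show ?thesis
    using assms(4) card_subset_eq[of ?A "{a, b}"] by simp
qed

lemma aug_vols_containing_other:
  assumes "h \<in> faces G" "a \<in> aug_vols G" "h \<in> aug_bd G a"
  shows "\<exists>b\<in>aug_vols G. b \<noteq> a \<and> h \<in> aug_bd G b"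
proof -
  let ?A = "{w \<in> aug_vols G. h \<in> aug_bd G w}"
  have "a \<in> ?A" "finite ?A"
    using assms finite_aug_vols by auto
  then have "card ?A = 2"
    using card_aug_vols_containing[OF assms(1)] by (auto simp: card_gt_0_iff)
  then obtain x y where "?A = {x, y}" "x \<noteq> y"
    by (auto simp: card_2_iff)
  then show ?thesis
    using \<open>a \<in> ?A\<close> by (cases "a = x") auto
qed

lemma closed_faces_aug_bd: "w \<in> aug_vols G \<Longrightarrow> closed_faces G (aug_bd G w)"
  using closed_faces_bdv closed_faces_calF_component[of _]
  by (auto simp: aug_vols_def aug_bd_def face_classes_eq)

lemma aug_bd_nonempty:
  assumes "w \<in> aug_vols G"
  shows "aug_bd G w \<noteq> {}"
proof (cases w)
  case (Inl v)
  then show ?thesis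
    using assms cell_complex by (auto simp: aug_vols_def aug_bd_def cell_complex3_def)
next
  case (Inr C)
  then obtain f where "f \<in> calF G" "C = calF_component G f"
    using assms by (auto simp: aug_vols_def face_classes_eq)
  then show ?thesis
    using Inr self_in_calF_component[of f G] by (auto simp: aug_bd_def)
qed

lemma aug_adj_connected_Inl:
  assumes "u \<in> vols G" "u' \<in> vols G"
  shows "(aug_adj G {})\<^sup>*\<^sup>* (Inl u) (Inl u')"
proof -
  let ?r = "\<lambda>x y. x \<in> vols G \<and> y \<in> vols G \<and> (\<exists>h\<in>faces G. iota_f G h = {x, y})"
  have "?r\<^sup>*\<^sup>* u u'"
    using dual_conn assms unfolding dual_connected_def conn_def by blast
  then show ?thesis
  proof (induction rule: rtranclp_induct)
    case (step x y)
    then have "aug_adj G {} (Inl x) (Inl y)"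
      by (force simp: aug_adj_def aug_vols_def aug_bd_def mem_iota_f)
    then show ?case
      by (rule rtranclp.rtrancl_into_rtrancl[OF step.IH])
  qed simp
qed

lemma aug_adj_to_Inl:
  assumes a: "a \<in> aug_vols G"
  obtains u where "u \<in> vols G" "(aug_adj G {})\<^sup>*\<^sup>* a (Inl u)"
proof (cases a)
  case (Inr C)
  then obtain f where f: "f \<in> calF G" "a = Inr (calF_component G f)"
    using a by (auto simp: aug_vols_def face_classes_eq)
  then obtain u where "iota_f G f = {u}"
    using calF_iota_f[OF f(1)] by blast
  then have u: "u \<in> vols G" "f \<in> bdv G u"
    using mem_iota_f[of u G f] by auto
  moreover have "f \<in> faces G" "f \<in> calF_component G f"
    using f(1) self_in_calF_component[OF f(1)] by (auto simp: calF_def)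
  ultimately have "aug_adj G {} a (Inl u)"
    using a f(2) by (auto simp: aug_adj_def aug_vols_def aug_bd_def)
  then show thesis
    using that u(1) by blast
qed (use a that in \<open>auto simp: aug_vols_def\<close>)

lemma aug_adj_connected:
  assumes "a \<in> aug_vols G" "b \<in> aug_vols G"
  shows "(aug_adj G {})\<^sup>*\<^sup>* a b"
proof -
  obtain u u' where u: "u \<in> vols G" "u' \<in> vols G"
    and a_u: "(aug_adj G {})\<^sup>*\<^sup>* a (Inl u)" and b_u': "(aug_adj G {})\<^sup>*\<^sup>* b (Inl u')"
    using aug_adj_to_Inl assms by metis
  have "(aug_adj G {})\<^sup>*\<^sup>* (Inl u') b"
    by (rule sympD[OF symp_rtranclp[OF symp_aug_adj] b_u'])
  then show ?thesis
    using rtranclp_trans[OF rtranclp_trans[OF a_u aug_adj_connected_Inl[OF u]]] by blast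
qed

lemma aug_boundary_subset_faces: "aug_boundary G W \<subseteq> faces G"
  by (auto simp: aug_boundary_def)

lemma bd_faces_aug_boundary:
  assumes "W \<subseteq> aug_vols G"
  shows "bd_faces G (aug_boundary G W) = {}"
proof -
  have "closed_faces G (symdiff_sum (aug_bd G) W)"
    using finite_subset[OF assms finite_aug_vols] closed_faces_aug_bd assms
    by (intro closed_faces_symdiff_sum[OF finite_faces]) auto
  then show ?thesis
    using bd_faces_eq_empty_iff[OF aug_boundary_subset_faces[of W]]
    unfolding aug_boundary_eq_symdiff_sum[OF assms] by blast
qed

lemma aug_adj_reachable:
  assumes "\<nu> \<in> aug_vols G" "(aug_adj G K)\<^sup>*\<^sup>* \<nu> w"
  shows "w \<in> aug_vols G"
  using assms(2,1) by (induction rule: rtranclp_induct) (auto simp: aug_adj_def)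

lemma mem_aug_boundary_if_crossing:
  assumes "W \<subseteq> aug_vols G" "h \<in> faces G" "a \<in> W" "b \<in> aug_vols G - W"
    and "h \<in> aug_bd G a" "h \<in> aug_bd G b"
  shows "h \<in> aug_boundary G W"
proof -
  have "{w \<in> aug_vols G. h \<in> aug_bd G w} = {a, b}"
    using assms by (intro aug_vols_containing_pair) auto
  then have "{w \<in> W. h \<in> aug_bd G w} = {a}"
    using assms(1,3,4) by auto
  then show ?thesis
    using assms(2) by (simp add: aug_boundary_def)
qed

lemma aug_boundary_subset_if_closed_under_aug_adj:
  assumes "W \<subseteq> aug_vols G" "\<And>a b. a \<in> W \<Longrightarrow> aug_adj G K a b \<Longrightarrow> b \<in> W"
  shows "aug_boundary G W \<subseteq> K"
proof
  fix h assume h: "h \<in> aug_boundary G W"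
  show "h \<in> K"
  proof (rule ccontr)
    assume "h \<notin> K"
    have "h \<in> faces G" "odd (card {w \<in> W. h \<in> aug_bd G w})"
      using h by (auto simp: aug_boundary_def)
    then obtain a where a: "a \<in> W" "h \<in> aug_bd G a"
      by (metis (no_types, lifting) Collect_empty_eq card.empty even_zero)
    then obtain b where "b \<in> aug_vols G" "b \<noteq> a" "h \<in> aug_bd G b"
      using aug_vols_containing_other[OF \<open>h \<in> faces G\<close>] assms(1) by blast
    moreover have "b \<in> W"
      using assms(2)[OF a(1)] a \<open>b \<in> aug_vols G\<close> \<open>h \<in> faces G\<close> \<open>h \<notin> K\<close> \<open>h \<in> aug_bd G b\<close> assms(1)
      by (auto simp: aug_adj_def)
    ultimately have "{w \<in> W. h \<in> aug_bd G w} = {a, b}"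
      using aug_vols_containing_pair[OF \<open>h \<in> faces G\<close>] a assms(1) by blast
    then show False
      using \<open>odd (card {w \<in> W. h \<in> aug_bd G w})\<close> \<open>b \<noteq> a\<close> by simp
  qed
qed

lemma aug_boundary_nonempty:
  assumes "W \<subseteq> aug_vols G" "a \<in> W" "b \<in> aug_vols G - W"
  shows "aug_boundary G W \<noteq> {}"
proof -
  obtain x y where "aug_adj G {} x y" "x \<in> W" "y \<notin> W"
    using aug_adj_connected[of a b] assms rtranclp_crossing[of "aug_adj G {}" a b "\<lambda>w. w \<in> W"]
    by blast
  then obtain h where "h \<in> faces G" "h \<in> aug_bd G x" "h \<in> aug_bd G y" "y \<in> aug_vols G"
    by (auto simp: aug_adj_def)
  then show ?thesis
    using mem_aug_boundary_if_crossing[OF assms(1)] \<open>x \<in> W\<close> \<open>y \<notin> W\<close> by blast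
qed

lemma face_path_meets_aug_boundary:
  assumes fp: "face_path (aug_vols G) (aug_bd G) (faces G) fs vs"
    and W: "W \<subseteq> aug_vols G" "\<nu> \<in> W" "\<nu>' \<in> aug_vols G - W"
    and ends: "hd fs \<in> aug_bd G \<nu>" "last fs \<in> aug_bd G \<nu>'"
  shows "set fs \<inter> aug_boundary G W \<noteq> {}"
proof -
  define sq where "sq = \<nu> # vs @ [\<nu>']"
  have len: "length fs = Suc (length vs)" "length sq = Suc (length fs)"
    using fp by (auto simp: face_path_def sq_def)
  have "sq ! 0 \<in> W" "sq ! length fs \<notin> W"
    using W len by (auto simp: sq_def nth_append)
  then obtain i where i: "i < length fs" "sq ! i \<in> W" "sq ! Suc i \<notin> W"
    using nat_crossing[of "\<lambda>i. sq ! i \<in> W"] by blast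
  have "set sq \<subseteq> aug_vols G"
    using fp W by (auto simp: sq_def face_path_def)
  then have "sq ! Suc i \<in> aug_vols G"
    using i(1) len by (simp add: subset_iff)
  moreover have "fs ! i \<in> faces G"
    using fp i(1) by (auto simp: face_path_def)
  ultimately have "fs ! i \<in> aug_boundary G W"
    using mem_aug_boundary_if_crossing[OF W(1)] face_path_ends_between[OF fp ends i(1)] i(2,3)
    by (simp add: sq_def)
  then show ?thesis
    using nth_mem[OF i(1)] by blast
qed

section \<open>Cut sets\<close>

text \<open>By (L1) a closed set of faces is the boundary of a set \<open>W\<close> of augmented volumes, and a
  face path from inside \<open>W\<close> to outside must cross that boundary.\<close>

lemma closed_subset_non_cut_set_empty:
  assumes "\<not> is_cut_set G K" "D \<subseteq> K" "D \<subseteq> faces G" "bd_faces G D = {}"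
  shows "D = {}"
proof (rule ccontr)
  assume "D \<noteq> {}"
  then obtain f where f: "f \<in> D"
    by blast
  obtain W where W: "W \<subseteq> aug_vols G" "D = aug_boundary G W"
    using L1_no_interior_boundaries assms(3,4) unfolding L1_def aug_boundary_def by blast
  then have odd: "odd (card {w \<in> W. f \<in> aug_bd G w})" and "f \<in> faces G"
    using f by (auto simp: aug_boundary_def)
  then obtain \<nu> where \<nu>: "\<nu> \<in> W" "f \<in> aug_bd G \<nu>"
    by (metis (no_types, lifting) Collect_empty_eq card.empty even_zero)
  have "W \<noteq> aug_vols G"
    using odd card_aug_vols_containing[OF \<open>f \<in> faces G\<close>] by auto
  then obtain \<nu>' where \<nu>': "\<nu>' \<in> aug_vols G - W"
    using W(1) by blast
  obtain fs vs where "face_path (aug_vols G) (aug_bd G) (faces G) fs vs" "hd fs \<in> aug_bd G \<nu>"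
    "last fs \<in> aug_bd G \<nu>'" "set fs \<inter> K = {}"
    using assms(1) W(1) \<nu>(1) \<nu>' unfolding is_cut_set_def by blast
  then show False
    using face_path_meets_aug_boundary[OF _ W(1) \<nu>(1) \<nu>'] W(2) assms(2) by blast
qed

lemma cut_set_contains_closed:
  assumes "is_cut_set G K"
  obtains T where "T \<subseteq> K" "T \<subseteq> faces G" "T \<noteq> {}" "bd_faces G T = {}"
proof -
  obtain \<nu> \<nu>' where \<nu>: "\<nu> \<in> aug_vols G" "\<nu>' \<in> aug_vols G"
    and cut: "\<And>fs vs. face_path (aug_vols G) (aug_bd G) (faces G) fs vs \<Longrightarrow>
        hd fs \<in> aug_bd G \<nu> \<Longrightarrow> last fs \<in> aug_bd G \<nu>' \<Longrightarrow> \<nu> \<notin> set vs \<Longrightarrow> \<nu>' \<notin> set vs \<Longrightarrow>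
        set fs \<inter> K \<noteq> {}"
    using assms unfolding is_cut_set_def by blast
  define R where "R = {w. (aug_adj G K)\<^sup>*\<^sup>* \<nu> w}"
  have "\<nu> \<noteq> \<nu>' \<Longrightarrow> \<nu>' \<notin> R"
    using aug_adj_face_path[of G K \<nu> \<nu>'] cut by (auto simp: R_def)
  then consider "\<nu> = \<nu>'" | "\<nu>' \<in> aug_vols G - R"
    using \<nu> by blast
  then show thesis
  proof cases
    case 1
    have "face_path (aug_vols G) (aug_bd G) (faces G) [h] []" if "h \<in> aug_bd G \<nu>" for h
      using aug_bd_subset_faces[OF \<nu>(1)] that by (auto simp: face_path_def)
    then have "aug_bd G \<nu> \<subseteq> K"
      using cut 1 by fastforce
    moreover have "bd_faces G (aug_bd G \<nu>) = {}"
      using bd_faces_eq_empty_iff[OF aug_bd_subset_faces[OF \<nu>(1)]] closed_faces_aug_bd[OF \<nu>(1)]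
      by simp
    ultimately show thesis
      using that aug_bd_subset_faces[OF \<nu>(1)] aug_bd_nonempty[OF \<nu>(1)] by blast
  next
    case 2
    have R: "R \<subseteq> aug_vols G"
      using aug_adj_reachable[OF \<nu>(1)] by (auto simp: R_def)
    have "aug_boundary G R \<subseteq> K"
      using R by (rule aug_boundary_subset_if_closed_under_aug_adj) (auto simp: R_def)
    moreover have "\<nu> \<in> R"
      by (simp add: R_def)
    then have "aug_boundary G R \<noteq> {}"
      using aug_boundary_nonempty[OF R _ 2] by blast
    ultimately show thesis
      using that aug_boundary_subset_faces bd_faces_aug_boundary[OF R] by blast
  qed
qed

section \<open>Procedure P1\<close>

lemma not_cut_set_empty: "\<not> is_cut_set G {}"
  using cut_set_contains_closed by blast

text \<open>A face rejected by P1 closes a cycle with faces already accepted.\<close>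

lemma boundary_spanned_if_cut_set:
  assumes "E \<subseteq> faces G" "\<not> is_cut_set G E" "f \<in> faces G" "is_cut_set G (E \<union> {f})"
  shows "boundary_spanned G E f"
proof -
  obtain T where T: "T \<subseteq> E \<union> {f}" "T \<subseteq> faces G" "T \<noteq> {}" "bd_faces G T = {}"
    using cut_set_contains_closed[OF assms(4)] by blast
  have "f \<in> T"
  proof (rule ccontr)
    assume "f \<notin> T"
    then have "T \<subseteq> E"
      using T(1) by blast
    then show False
      using closed_subset_non_cut_set_empty[OF assms(2) _ T(2,4)] T(3) by blast
  qed
  then have T_split: "symdiff {f} (T - {f}) = T"
    by (auto simp: symdiff_def)
  have "finite (T - {f})"
    using finite_subset[OF T(2) finite_faces] by simp
  then have "bd_faces G (symdiff {f} (T - {f})) = symdiff (bd_faces G {f}) (bd_faces G (T - {f}))"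
    by (intro bd_faces_symdiff) simp_all
  then have "symdiff (bd_faces G {f}) (bd_faces G (T - {f})) = {}"
    unfolding T_split using T(4) by simp
  then have "bd_faces G {f} = bd_faces G (T - {f})"
    by (simp add: symdiff_eq_empty_iff)
  moreover have "T - {f} \<subseteq> E"
    using T(1) by blast
  ultimately show ?thesis
    unfolding boundary_spanned_def by blast
qed

definition p1_invariant :: "'f set \<times> 'e set \<times> 'f set \<Rightarrow> bool" where
  "p1_invariant st \<longleftrightarrow> (case st of (E, _, X) \<Rightarrow>
     E \<subseteq> faces G \<and> \<not> is_cut_set G E \<and> X \<subseteq> faces G \<and> (\<forall>f\<in>X. boundary_spanned G E f))"

lemma p1_process_invariant:
  assumes "E \<subseteq> faces G" "\<not> is_cut_set G E" "f \<in> faces G" "p1_process G (E, B) f = (E', B')"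
  shows "E \<subseteq> E'" "E' \<subseteq> faces G" "\<not> is_cut_set G E'" "boundary_spanned G E' f"
proof -
  have "E \<subseteq> E' \<and> E' \<subseteq> faces G \<and> \<not> is_cut_set G E' \<and> boundary_spanned G E' f"
  proof (cases "is_cut_set G (E \<union> {f})")
    case True
    then show ?thesis
      using assms boundary_spanned_if_cut_set[OF assms(1-3)] by (simp add: p1_process_def)
  next
    case False
    then show ?thesis
      using assms by (auto simp: p1_process_def boundary_spanned_def)
  qed
  then show "E \<subseteq> E'" "E' \<subseteq> faces G" "\<not> is_cut_set G E'" "boundary_spanned G E' f"
    by simp_all
qed

lemma foldl_p1_process_invariant:
  assumes "set fl \<subseteq> faces G" "E \<subseteq> faces G" "\<not> is_cut_set G E"
    "foldl (p1_process G) (E, B) fl = (E', B')"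
  shows "E \<subseteq> E' \<and> E' \<subseteq> faces G \<and> \<not> is_cut_set G E' \<and> (\<forall>f\<in>set fl. boundary_spanned G E' f)"
  using assms
proof (induction fl arbitrary: E B)
  case (Cons f fl)
  obtain E\<^sub>1 B\<^sub>1 where step: "p1_process G (E, B) f = (E\<^sub>1, B\<^sub>1)"
    by fastforce
  have "f \<in> faces G"
    using Cons.prems(1) by simp
  note inv = p1_process_invariant[OF Cons.prems(2,3) this step]
  have "E\<^sub>1 \<subseteq> E' \<and> E' \<subseteq> faces G \<and> \<not> is_cut_set G E' \<and> (\<forall>f\<in>set fl. boundary_spanned G E' f)"
    using Cons.IH[of E\<^sub>1 B\<^sub>1] Cons.prems(1,4) inv(2,3) step by simp
  then show ?case
    using inv(1,4) boundary_spanned_mono by auto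
qed simp

lemma p1_round_invariant:
  assumes "p1_round G st st'" "p1_invariant st"
  shows "p1_invariant st'"
  using assms
proof (induction rule: p1_round.induct)
  case (1 X R B fl E E' B')
  have inv: "E \<subseteq> faces G" "\<not> is_cut_set G E" "X \<subseteq> faces G" "\<forall>f\<in>X. boundary_spanned G E f"
    using 1(6) by (auto simp: p1_invariant_def)
  have "set fl \<subseteq> faces G"
    using 1(2,4) by auto
  note fold = foldl_p1_process_invariant[OF this inv(1,2) 1(5)]
  have "boundary_spanned G E' f" if "f \<in> X \<union> R" for f
    using that fold inv(4) 1(4) boundary_spanned_mono[of G E f E'] by auto
  moreover have "X \<union> R \<subseteq> faces G"
    using inv(3) 1(2) by auto
  ultimately show ?case
    using fold by (auto simp: p1_invariant_def)
qed

lemma p1_returns_invariant: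
  assumes "p1_returns G SE E"
  shows "E \<subseteq> faces G" "\<not> is_cut_set G E" "\<And>f. f \<in> faces G \<Longrightarrow> boundary_spanned G E f"
proof -
  obtain B where run: "(p1_round G)\<^sup>*\<^sup>* ({}, SE, {}) (E, B, faces G)"
    using assms by (auto simp: p1_returns_def)
  have "p1_invariant ({}, SE, {})"
    using not_cut_set_empty by (simp add: p1_invariant_def)
  with run have "p1_invariant (E, B, faces G)"
    by (induction rule: rtranclp_induct) (auto intro: p1_round_invariant)
  then show "E \<subseteq> faces G" "\<not> is_cut_set G E" "\<And>f. f \<in> faces G \<Longrightarrow> boundary_spanned G E f"
    by (auto simp: p1_invariant_def)
qed

lemma bd_faces_inj_on_non_cut_set:
  assumes "\<not> is_cut_set G E" "E \<subseteq> faces G" "A \<subseteq> E" "B \<subseteq> E" "bd_faces G A = bd_faces G B"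
  shows "A = B"
proof -
  have "finite A" "finite B"
    using finite_subset[OF _ finite_faces] assms(2-4) by blast+
  then have "bd_faces G (symdiff A B) = {}"
    using assms(5) by (simp add: bd_faces_symdiff)
  moreover have "symdiff A B \<subseteq> E"
    using assms(3,4) by (rule symdiff_subset)
  ultimately have "symdiff A B = {}"
    using closed_subset_non_cut_set_empty[OF assms(1)] assms(2) by blast
  then show ?thesis
    by (simp add: symdiff_eq_empty_iff)
qed

end

theorem theorem1:
  fixes G :: "('x, 'e, 'f, 'v) complex3"
    and SE :: "'e set" and F0 :: "'f set" and Ecal :: "'f set"
  assumes "cell_complex3 G"
    and "connected_complex G"
    and "at_most_two_vols G"
    and "L1 G"
    and "L2 G"
    and "dual_connected G"
    and "F0 \<subseteq> faces G"
    and "SE = bd_faces G F0"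
    and "p1_returns G SE Ecal"
  shows "\<exists>!Eh. Eh \<subseteq> Ecal \<and> bd_faces G Eh = SE"
proof -
  interpret toric_lattice G
    using assms by unfold_locales
  note P1 = p1_returns_invariant[OF assms(9)]
  obtain T where "T \<subseteq> Ecal" "bd_faces G F0 = bd_faces G T"
    using bd_faces_spanned[OF finite_faces P1(1) assms(7) P1(3)] assms(7) by blast
  then show ?thesis
    using bd_faces_inj_on_non_cut_set[OF P1(2,1)] assms(8) by (intro ex1I[of _ T]) auto
qed

end
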